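(* Let $A_0(t)$ be an operator-valued function (on a finite-dimensional space) analytic in $t$ over the reals, $\alpha$ real, and define $\alpha A_j(t)$ recursively by $$\alpha A_{j+1}(t)=\sum_{m=1}^\infty(-1)^m\frac{m}{(m+1)!}\,\mathrm{ad}^m_{\int_0^t\alpha A_j(s)ds}\big[\alpha A_j(t)\big].$$ Let $U(t)=\mathcal{T}e^{\int_0^t\alpha A_0(s)ds}$ and $U_F(t)=\prod_{j=0}^{k-1}e^{\int_0^t\alpha A_j(s)ds}$ (factor $j=0$ leftmost). Then $$\|U_F(t)-U(t)\|=O\big(\alpha^{2^k}t^{2^{k+1}-1}\big).$$
   Context: $\mathcal{T}e^{\int_0^tX(s)ds}$ denotes the time-ordered exponential, i.e. the solution $W(t)$ of $W'(t)=X(t)W(t)$, $W(0)=I$. $\mathrm{ad}_X(Y)=[X,Y]$, $\mathrm{ad}_X^m=\mathrm{ad}_X\circ\mathrm{ad}_X^{m-1}$. The factor $-i$ is absorbed into $A_0$ (e.g. $A_0$ anti-Hermitian), so that $U$ and $U_F$ are bounded. $\|\cdot\|$ is the operator norm; asymptotics refer to small $\alpha,t$. *)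

theory Defs
  imports "HOL-Analysis.Analysis"
begin

primrec mpow :: "complex^'n^'n \<Rightarrow> nat \<Rightarrow> complex^'n^'n" where
  "mpow M 0 = mat 1"
| "mpow M (Suc n) = M ** mpow M n"

definition mexp :: "complex^'n^'n \<Rightarrow> complex^'n^'n" where
  "mexp M = (\<Sum>k. (1 / fact k) *\<^sub>R mpow M k)"

definition opnorm :: "complex^'n^'n \<Rightarrow> real" where
  "opnorm M = onorm (\<lambda>x. M *v x)"

definition ad :: "complex^'n^'n \<Rightarrow> complex^'n^'n \<Rightarrow> complex^'n^'n" where
  "ad X Y = X ** Y - Y ** X"

definition oint :: "(real \<Rightarrow> 'b::real_normed_vector) \<Rightarrow> real \<Rightarrow> 'b" where
  "oint f t = (if 0 \<le> t then integral {0..t} f else - integral {t..0} f)"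

definition real_analytic :: "(real \<Rightarrow> 'b::real_normed_vector) \<Rightarrow> bool" where
  "real_analytic f \<longleftrightarrow>
     (\<forall>t0. \<exists>r>0. \<exists>c::nat \<Rightarrow> 'b. \<forall>t. \<bar>t - t0\<bar> < r \<longrightarrow> (\<lambda>n. (t - t0) ^ n *\<^sub>R c n) sums f t)"

text \<open>magA alpha A0 j t is the operator written alpha A_j(t) in the paper.\<close>
fun magA :: "real \<Rightarrow> (real \<Rightarrow> complex^'n^'n) \<Rightarrow> nat \<Rightarrow> real \<Rightarrow> complex^'n^'n" where
  "magA \<alpha> A0 0 t = \<alpha> *\<^sub>R A0 t"
| "magA \<alpha> A0 (Suc j) t =
     (\<Sum>m. ((-1) ^ Suc m * real (Suc m) / fact (Suc m + 1)) *\<^sub>R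
            ((ad (oint (magA \<alpha> A0 j) t) ^^ Suc m) (magA \<alpha> A0 j t)))"

definition UF :: "real \<Rightarrow> (real \<Rightarrow> complex^'n^'n) \<Rightarrow> nat \<Rightarrow> real \<Rightarrow> complex^'n^'n" where
  "UF \<alpha> A0 k t = foldr (\<lambda>j P. mexp (oint (magA \<alpha> A0 j) t) ** P) [0..<k] (mat 1)"

end

theory Submission
  imports Defs
begin

text \<open>Put \<open>\<Omega>\<^sub>j(t) = \<integral>\<^sub>0\<^sup>t \<alpha>A\<^sub>j\<close>, \<open>V\<^sub>0 = U\<close> and \<open>V\<^sub>j\<^sub>+\<^sub>1 = e\<^bsup>-\<Omega>\<^sub>j\<^esup> V\<^sub>j\<close>.
  Differentiating \<open>e\<^bsup>-\<Omega>\<^esup>\<close> with the noncommutative formula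
  \<open>d e\<^bsup>X\<^esup> = (\<Sum>\<^sub>k ad\<^sub>X\<^sup>k dX / (k+1)!) e\<^bsup>X\<^esup>\<close> shows \<open>V\<^sub>j' = \<alpha>A\<^sub>j V\<^sub>j\<close>, while
  \<open>U = e\<^bsup>\<Omega>\<^sub>0\<^esup> \<cdots> e\<^bsup>\<Omega>\<^sub>j\<^sub>-\<^sub>1\<^esup> V\<^sub>j\<close> by construction; hence \<open>U\<^sub>F - U = U\<^sub>F (1 - V\<^sub>k)\<close>.

  Near \<open>t = 0\<close>, \<open>\<alpha>A\<^sub>j\<close> is a power series in \<open>t\<close>, controlled by a weighted \<open>\<ell>\<^sup>1\<close> norm of its
  coefficients. If the coefficients of \<open>\<alpha>A\<^sub>j\<close> vanish below order \<open>q\<close>, those of \<open>\<alpha>A\<^sub>j\<^sub>+\<^sub>1\<close> vanish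
  below order \<open>2q + 2\<close>, because the lowest-order term of \<open>[\<Omega>\<^sub>j, \<alpha>A\<^sub>j]\<close> is the commutator of
  two multiples of the same coefficient; and the norm of \<open>\<alpha>A\<^sub>j\<^sub>+\<^sub>1\<close> is quadratic in that of
  \<open>\<alpha>A\<^sub>j\<close>. By induction \<open>\<alpha>A\<^sub>k(t) = O(\<alpha>\<^bsup>2\<^sup>k\<^esup> t\<^bsup>2\<^sup>k\<^sup>+\<^sup>1 - 2\<^esup>)\<close>, and a Gronwall estimate for
  \<open>V\<^sub>k' = \<alpha>A\<^sub>k V\<^sub>k\<close>, \<open>V\<^sub>k(0) = 1\<close> gives \<open>1 - V\<^sub>k(t) = O(\<alpha>\<^bsup>2\<^sup>k\<^esup> t\<^bsup>2\<^sup>k\<^sup>+\<^sup>1 - 1\<^esup>)\<close>.\<close>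

section \<open>Commutators and the exponential in a Banach algebra\<close>

definition commutator :: "'a::ring \<Rightarrow> 'a \<Rightarrow> 'a" where
  "commutator X Y = X * Y - Y * X"

lemma norm_commutator_le:
  fixes X Y :: "'a::real_normed_algebra"
  shows "norm (commutator X Y) \<le> 2 * norm X * norm Y"
proof -
  have "norm (commutator X Y) \<le> norm (X * Y) + norm (Y * X)"
    unfolding commutator_def by (rule norm_triangle_ineq4)
  also have "\<dots> \<le> norm X * norm Y + norm Y * norm X"
    by (intro add_mono norm_mult_ineq)
  finally show ?thesis by simp
qed

lemma norm_commutator_iter_le:
  fixes X Y :: "'a::real_normed_algebra"
  shows "norm ((commutator X ^^ k) Y) \<le> (2 * norm X) ^ k * norm Y"
proof (induction k)
  case (Suc k)
  have "norm ((commutator X ^^ Suc k) Y) \<le> 2 * norm X * norm ((commutator X ^^ k) Y)"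
    using norm_commutator_le by simp
  also have "\<dots> \<le> 2 * norm X * ((2 * norm X) ^ k * norm Y)"
    by (intro mult_left_mono Suc) auto
  finally show ?case by (simp add: algebra_simps)
qed simp

lemma commutator_iter_minus_right:
  fixes X Y :: "'a::ring"
  shows "(commutator X ^^ k) (- Y) = - (commutator X ^^ k) Y"
  by (induction k) (simp_all add: commutator_def algebra_simps)

lemma commutator_iter_minus_left:
  fixes X Y :: "'a::real_algebra"
  shows "(commutator (- X) ^^ k) Y = ((-1) ^ k :: real) *\<^sub>R (commutator X ^^ k) Y"
  by (induction k) (simp_all add: commutator_def algebra_simps)

lemma sum_choose_Suc_split:
  fixes g :: "nat \<Rightarrow> nat \<Rightarrow> 'a::real_vector"
  shows "(\<Sum>k\<le>Suc n. real (Suc n choose k) *\<^sub>R g k (Suc n - k)) =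
    (\<Sum>k\<le>n. real (n choose k) *\<^sub>R g (Suc k) (n - k)) + (\<Sum>k\<le>n. real (n choose k) *\<^sub>R g k (Suc n - k))"
proof -
  have "(\<Sum>k\<le>Suc n. real (Suc n choose k) *\<^sub>R g k (Suc n - k)) =
     g 0 (Suc n) + (\<Sum>k\<le>n. real (Suc n choose Suc k) *\<^sub>R g (Suc k) (n - k))"
    by (simp only: sum.atMost_Suc_shift) simp
  moreover have "(\<Sum>k\<le>n. real (Suc n choose Suc k) *\<^sub>R g (Suc k) (n - k)) =
     (\<Sum>k\<le>n. real (n choose k) *\<^sub>R g (Suc k) (n - k)) +
     (\<Sum>k<n. real (n choose Suc k) *\<^sub>R g (Suc k) (n - k))"
    by (simp add: binomial_Suc_Suc scaleR_add_left sum.distrib lessThan_Suc_atMost[symmetric])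
  moreover have "(\<Sum>k\<le>n. real (n choose k) *\<^sub>R g k (Suc n - k)) =
     g 0 (Suc n) + (\<Sum>k<n. real (n choose Suc k) *\<^sub>R g (Suc k) (n - k))"
    by (simp add: lessThan_Suc_atMost[symmetric] sum.lessThan_Suc_shift del: sum.lessThan_Suc)
  ultimately show ?thesis by (simp add: algebra_simps)
qed

lemma power_mult_eq_commutator_sum:
  fixes Y H :: "'a::real_algebra_1"
  shows "Y ^ n * H = (\<Sum>k\<le>n. real (n choose k) *\<^sub>R ((commutator Y ^^ k) H * Y ^ (n - k)))"
proof (induction n arbitrary: H)
  case (Suc n)
  have "Y ^ Suc n * H = Y ^ n * commutator Y H + (Y ^ n * H) * Y"
    unfolding power_Suc2 by (simp add: commutator_def algebra_simps mult.assoc del: power_Suc)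
  also have "(Y ^ n * H) * Y = (\<Sum>k\<le>n. real (n choose k) *\<^sub>R ((commutator Y ^^ k) H * Y ^ (Suc n - k)))"
    unfolding Suc.IH[of H] sum_distrib_right
    by (intro sum.cong refl) (simp add: Suc_diff_le power_commutes mult.assoc)
  also have "Y ^ n * commutator Y H =
      (\<Sum>k\<le>n. real (n choose k) *\<^sub>R ((commutator Y ^^ Suc k) H * Y ^ (n - k)))"
    unfolding Suc.IH[of "commutator Y H"] by (simp add: funpow_swap1)
  finally show ?case
    using sum_choose_Suc_split[of n "\<lambda>k j. (commutator Y ^^ k) H * Y ^ j"] by simp
qed simp

lemma summable_norm_commutator_series:
  fixes Y H :: "'a::real_normed_algebra"
  assumes "\<And>k. \<bar>c k\<bar> \<le> 1 / fact k"
  shows "summable (\<lambda>k. norm (c k *\<^sub>R (commutator Y ^^ k) H))"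
proof (rule summable_comparison_test')
  show "summable (\<lambda>k. norm H * ((2 * norm Y) ^ k /\<^sub>R fact k))"
    by (intro summable_mult summable_exp_generic)
  fix k :: nat
  have "norm (c k *\<^sub>R (commutator Y ^^ k) H) \<le> (1 / fact k) * ((2 * norm Y) ^ k * norm H)"
    unfolding norm_scaleR by (intro mult_mono assms norm_commutator_iter_le) auto
  then show "norm (norm (c k *\<^sub>R (commutator Y ^^ k) H)) \<le> norm H * ((2 * norm Y) ^ k /\<^sub>R fact k)"
    by (simp add: field_simps)
qed

lemma Cauchy_product_commutator_series_exp:
  fixes Y H :: "'a::{real_normed_algebra_1,banach}"
  assumes "\<And>k. \<bar>c k\<bar> \<le> 1 / fact k"
  shows "(\<lambda>n. \<Sum>i\<le>n. (c i *\<^sub>R (commutator Y ^^ i) H) * (Y ^ (n - i) /\<^sub>R fact (n - i)))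
           sums ((\<Sum>k. c k *\<^sub>R (commutator Y ^^ k) H) * exp Y)"
  using Cauchy_product_sums[OF summable_norm_commutator_series[OF assms] summable_norm_exp]
  by (simp add: exp_def)

lemma exp_mult_eq_commutator_series:
  fixes Y H :: "'a::{real_normed_algebra_1,banach}"
  shows "exp Y * H = (\<Sum>k. (1 / fact k) *\<^sub>R (commutator Y ^^ k) H) * exp Y"
proof -
  have "(Y ^ n /\<^sub>R fact n) * H =
      (\<Sum>i\<le>n. ((1 / fact i) *\<^sub>R (commutator Y ^^ i) H) * (Y ^ (n - i) /\<^sub>R fact (n - i)))" for n
  proof -
    have "(Y ^ n /\<^sub>R fact n) * H =
        (\<Sum>i\<le>n. (real (n choose i) / fact n) *\<^sub>R ((commutator Y ^^ i) H * Y ^ (n - i)))"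
      by (simp add: power_mult_eq_commutator_sum scaleR_sum_right divide_inverse ac_simps)
    also have "\<dots> = (\<Sum>i\<le>n. ((1 / fact i) *\<^sub>R (commutator Y ^^ i) H) * (Y ^ (n - i) /\<^sub>R fact (n - i)))"
      by (intro sum.cong refl) (simp add: binomial_fact divide_inverse)
    finally show ?thesis .
  qed
  then have "(\<lambda>n. (Y ^ n /\<^sub>R fact n) * H) sums ((\<Sum>k. (1 / fact k) *\<^sub>R (commutator Y ^^ k) H) * exp Y)"
    using Cauchy_product_commutator_series_exp[of "\<lambda>k. 1 / fact k"] by simp
  moreover have "(\<lambda>n. (Y ^ n /\<^sub>R fact n) * H) sums (exp Y * H)"
    by (rule sums_mult2[OF exp_converges])
  ultimately show ?thesis by (simp add: sums_iff)
qed

lemma eventually_norm_sum_diff_suminf_le: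
  fixes g :: "nat \<Rightarrow> 'a \<Rightarrow> 'b::real_normed_vector \<Rightarrow> 'c::banach"
  assumes bound: "\<And>n x h. x \<in> S \<Longrightarrow> norm (g n x h) \<le> c n * norm h"
    and c: "summable c" and e: "0 < e"
  shows "\<forall>\<^sub>F n in sequentially. \<forall>x\<in>S. \<forall>h. norm ((\<Sum>i<n. g i x h) - (\<Sum>i. g i x h)) \<le> e * norm h"
proof -
  obtain N where N: "\<And>n. N \<le> n \<Longrightarrow> norm (\<Sum>i. c (i + n)) < e"
    using suminf_exist_split[OF e c] by blast
  have "norm ((\<Sum>i<n. g i x h) - (\<Sum>i. g i x h)) \<le> e * norm h" if "N \<le> n" "x \<in> S" for n x h
  proof -
    have "summable (\<lambda>i. g i x h)"
      by (rule summable_comparison_test'[OF summable_mult2[OF c]]) (use bound \<open>x \<in> S\<close> in blast)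
    then have "norm ((\<Sum>i<n. g i x h) - (\<Sum>i. g i x h)) = norm (\<Sum>i. g (i + n) x h)"
      by (simp add: suminf_split_initial_segment[of _ n] norm_minus_commute)
    also have "\<dots> \<le> (\<Sum>i. c (i + n) * norm h)"
      by (intro norm_suminf_le bound \<open>x \<in> S\<close> summable_mult2 summable_ignore_initial_segment c)
    also have "\<dots> = (\<Sum>i. c (i + n)) * norm h"
      by (intro suminf_mult2[symmetric] summable_ignore_initial_segment c)
    also have "\<dots> \<le> e * norm h"
      using N[OF \<open>N \<le> n\<close>] by (intro mult_right_mono) auto
    finally show ?thesis .
  qed
  then show ?thesis by (auto intro: eventually_sequentiallyI)
qed

lemma has_derivative_series_Mtest:
  fixes f :: "nat \<Rightarrow> 'a::real_normed_vector \<Rightarrow> 'b::banach"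
  assumes S: "open S" "convex S"
    and f: "\<And>n x. x \<in> S \<Longrightarrow> (f n has_derivative f' n x) (at x)"
    and bound: "\<And>n x h. x \<in> S \<Longrightarrow> norm (f' n x h) \<le> c n * norm h"
    and c: "summable c"
    and a: "a \<in> S" "summable (\<lambda>n. f n a)"
    and x: "x \<in> S"
  shows "summable (\<lambda>n. f n x)"
    and "((\<lambda>x. \<Sum>n. f n x) has_derivative (\<lambda>h. \<Sum>n. f' n x h)) (at x)"
proof -
  have f_within: "\<And>n y. y \<in> S \<Longrightarrow> (f n has_derivative f' n y) (at y within S)"
    using f by (rule has_derivative_at_withinI)
  obtain g where g: "\<And>y. y \<in> S \<Longrightarrow> (\<lambda>n. f n y) sums g y"
    "\<And>y. y \<in> S \<Longrightarrow> (g has_derivative (\<lambda>h. \<Sum>n. f' n y h)) (at y within S)"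
    using has_derivative_series[OF S(2) f_within eventually_norm_sum_diff_suminf_le[OF bound c]
        a(1) summable_sums[OF a(2)]] by blast
  show "summable (\<lambda>n. f n x)" using g(1)[OF x] by (rule sums_summable)
  have "(g has_derivative (\<lambda>h. \<Sum>n. f' n x h)) (at x)"
    using g(2)[OF x] at_within_open[OF x S(1)] by simp
  then show "((\<lambda>x. \<Sum>n. f n x) has_derivative (\<lambda>h. \<Sum>n. f' n x h)) (at x)"
    by (rule has_derivative_transform_within_open[OF _ S(1) x]) (use g(1) sums_unique in metis)
qed

definition power_deriv :: "nat \<Rightarrow> 'a::real_algebra_1 \<Rightarrow> 'a \<Rightarrow> 'a" where
  "power_deriv n X H = (\<Sum>k<n. real (n choose Suc k) *\<^sub>R ((commutator X ^^ k) H * X ^ (n - Suc k)))"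

lemma power_deriv_0 [simp]: "power_deriv 0 X H = 0"
  by (simp add: power_deriv_def)

lemma power_deriv_Suc: "power_deriv (Suc n) X H = X ^ n * H + power_deriv n X H * X"
proof -
  have "power_deriv (Suc n) X H =
      (\<Sum>k<Suc n. (real (n choose k) + real (n choose Suc k)) *\<^sub>R ((commutator X ^^ k) H * X ^ (n - k)))"
    unfolding power_deriv_def by simp
  also have "\<dots> = (\<Sum>k\<le>n. real (n choose k) *\<^sub>R ((commutator X ^^ k) H * X ^ (n - k))) +
      (\<Sum>k<Suc n. real (n choose Suc k) *\<^sub>R ((commutator X ^^ k) H * X ^ (n - k)))"
    by (simp only: scaleR_add_left sum.distrib lessThan_Suc_atMost)
  also have "(\<Sum>k<Suc n. real (n choose Suc k) *\<^sub>R ((commutator X ^^ k) H * X ^ (n - k))) =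
      (\<Sum>k<n. real (n choose Suc k) *\<^sub>R ((commutator X ^^ k) H * X ^ (n - k)))"
    by simp
  also have "\<dots> = power_deriv n X H * X"
    unfolding power_deriv_def sum_distrib_right
  proof (intro sum.cong refl)
    fix k assume "k \<in> {..<n}"
    then have "X ^ (n - k) = X ^ (n - Suc k) * X"
      by (metis Suc_diff_Suc lessThan_iff power_Suc2)
    then show "real (n choose Suc k) *\<^sub>R ((commutator X ^^ k) H * X ^ (n - k)) =
        real (n choose Suc k) *\<^sub>R ((commutator X ^^ k) H * X ^ (n - Suc k)) * X"
      by (simp add: mult.assoc)
  qed
  finally show ?thesis by (simp add: power_mult_eq_commutator_sum)
qed

lemma has_derivative_power_alg:
  fixes X :: "'a::real_normed_algebra_1"
  shows "((\<lambda>X. X ^ n) has_derivative power_deriv n X) (at X within S)"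
proof (induction n)
  case 0
  then show ?case by (simp add: power_deriv_def[abs_def])
next
  case (Suc n)
  have "((\<lambda>X. X ^ n * X) has_derivative (\<lambda>h. X ^ n * h + power_deriv n X h * X)) (at X within S)"
    by (rule has_derivative_mult[OF Suc has_derivative_ident])
  then show ?case by (simp add: power_Suc2 power_deriv_Suc[abs_def] del: power_Suc)
qed

lemma norm_power_deriv_le:
  fixes X :: "'a::real_normed_algebra_1"
  assumes "norm X \<le> R"
  shows "norm (power_deriv n X H) \<le> (R + 1) ^ n * norm H"
proof (induction n)
  case (Suc n)
  have R: "0 \<le> R" using assms norm_ge_zero order_trans by blast
  have "norm (power_deriv (Suc n) X H) \<le> norm X ^ n * norm H + norm (power_deriv n X H) * norm X"
    unfolding power_deriv_Suc
    by (intro norm_triangle_le add_mono order_trans[OF norm_mult_ineq] mult_right_mono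
        norm_power_ineq) auto
  also have "\<dots> \<le> (R + 1) ^ n * norm H + (R + 1) ^ n * norm H * R"
    using R assms by (intro add_mono mult_mono Suc mult_right_mono power_mono) auto
  also have "\<dots> = (R + 1) ^ Suc n * norm H"
    by (simp add: algebra_simps)
  finally show ?case .
qed simp

definition exp_deriv :: "'a::{real_normed_algebra_1,banach} \<Rightarrow> 'a \<Rightarrow> 'a" where
  "exp_deriv X H = (\<Sum>k. (1 / fact (Suc k)) *\<^sub>R (commutator X ^^ k) H) * exp X"

lemma power_deriv_sums_exp_deriv:
  fixes X H :: "'a::{real_normed_algebra_1,banach}"
  shows "(\<lambda>n. power_deriv n X H /\<^sub>R fact n) sums exp_deriv X H"
proof -
  have summand_eq: "power_deriv (Suc m) X H /\<^sub>R fact (Suc m) =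
      (\<Sum>i\<le>m. ((1 / fact (Suc i)) *\<^sub>R (commutator X ^^ i) H) * (X ^ (m - i) /\<^sub>R fact (m - i)))"
    for m
    unfolding power_deriv_def scaleR_sum_right lessThan_Suc_atMost
  proof (intro sum.cong refl)
    fix i assume "i \<in> {..m}"
    then have "real (Suc m choose Suc i) = fact (Suc m) / (fact (Suc i) * fact (m - i))"
      using binomial_fact[of "Suc i" "Suc m", where 'a=real] by simp
    then have "inverse (fact (Suc m)) * real (Suc m choose Suc i) =
        inverse (fact (Suc i)) * inverse (fact (m - i))"
      by (simp add: field_simps del: fact_Suc)
    then show "(real (Suc m choose Suc i) *\<^sub>R ((commutator X ^^ i) H * X ^ (Suc m - Suc i))) /\<^sub>R fact (Suc m) =
      ((1 / fact (Suc i)) *\<^sub>R (commutator X ^^ i) H) * (X ^ (m - i) /\<^sub>R fact (m - i))"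
      by (simp only: scaleR_scaleR) (simp add: divide_inverse)
  qed
  have coeff: "\<bar>1 / fact (Suc k)\<bar> \<le> 1 / (fact k :: real)" for k
    by (simp add: frac_le fact_mono)
  have "(\<lambda>m. power_deriv (Suc m) X H /\<^sub>R fact (Suc m)) sums exp_deriv X H"
    unfolding exp_deriv_def summand_eq by (rule Cauchy_product_commutator_series_exp[OF coeff])
  then show ?thesis using sums_Suc_iff[of "\<lambda>n. power_deriv n X H /\<^sub>R fact n"] by simp
qed

lemma has_derivative_exp_alg:
  fixes X :: "'a::{real_normed_algebra_1,banach}"
  shows "(exp has_derivative exp_deriv X) (at X)"
proof -
  define R where "R = norm X + 1"
  have "0 < R" unfolding R_def using norm_ge_zero[of X] by linarith
  have "((\<lambda>x. \<Sum>n. x ^ n /\<^sub>R fact n) has_derivative (\<lambda>h. \<Sum>n. power_deriv n X h /\<^sub>R fact n)) (at X)"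
  proof (rule has_derivative_series_Mtest(2)[where a=0 and S="ball 0 R" and
      f="\<lambda>n x. x ^ n /\<^sub>R fact n" and f'="\<lambda>n x h. power_deriv n x h /\<^sub>R fact n"])
    show "summable (\<lambda>n. (R + 1) ^ n /\<^sub>R fact n)" by (rule summable_exp_generic)
    fix n and x h :: 'a assume "x \<in> ball 0 R"
    then have "norm (power_deriv n x h) \<le> (R + 1) ^ n * norm h"
      by (intro norm_power_deriv_le) simp
    then show "norm (power_deriv n x h /\<^sub>R fact n) \<le> (R + 1) ^ n /\<^sub>R fact n * norm h"
      by (simp add: divide_right_mono)
    show "((\<lambda>x. x ^ n /\<^sub>R fact n) has_derivative (\<lambda>h. power_deriv n x h /\<^sub>R fact n)) (at x)"
      by (intro has_derivative_scaleR_right has_derivative_power_alg)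
  next
    show "summable (\<lambda>n. (0::'a) ^ n /\<^sub>R fact n)" by (rule summable_exp_generic)
  qed (use \<open>0 < R\<close> in \<open>auto simp: R_def\<close>)
  moreover have "(\<lambda>h. \<Sum>n. power_deriv n X h /\<^sub>R fact n) = exp_deriv X"
    by (rule ext) (rule sums_unique[OF power_deriv_sums_exp_deriv, symmetric])
  ultimately show ?thesis
    unfolding exp_def by simp
qed

text \<open>\<open>fer_coeff m\<close> is the coefficient \<open>(-1)\<^sup>n n / (n + 1)!\<close> of \<open>ad\<^sup>n\<close> in the recursion for
  \<open>A\<^sub>j\<^sub>+\<^sub>1\<close>, indexed by \<open>m = n - 1\<close>.\<close>

definition fer_coeff :: "nat \<Rightarrow> real" where
  "fer_coeff m = (-1) ^ Suc m * real (Suc m) / fact (Suc m + 1)"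

definition fer_series :: "'a::{real_normed_algebra,banach} \<Rightarrow> 'a \<Rightarrow> 'a" where
  "fer_series F A = (\<Sum>m. fer_coeff m *\<^sub>R (commutator F ^^ Suc m) A)"

lemma abs_fer_coeff_le: "\<bar>fer_coeff m\<bar> \<le> 1 / fact m"
proof -
  have "fact (Suc m + 1) = (real m + 2) * ((real m + 1) * (fact m :: real))"
    by (simp add: algebra_simps)
  then have "\<bar>fer_coeff m\<bar> = 1 / ((real m + 2) * fact m)"
    by (simp add: fer_coeff_def abs_mult power_abs add.commute)
  also have "\<dots> \<le> 1 / fact m"
    by (rule divide_left_mono) auto
  finally show ?thesis .
qed

lemma fer_coeff_eq: "fer_coeff m = (-1) ^ Suc m * (1 / fact (Suc m) - 1 / fact (Suc (Suc m)))"
proof -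
  have "1 / fact (Suc m) - 1 / fact (Suc (Suc m)) = real (Suc m) / (fact (Suc (Suc m)) :: real)"
    by (simp add: divide_simps del: fact_Suc) (simp add: algebra_simps)
  then show ?thesis by (simp add: fer_coeff_def)
qed

lemma summable_fer_series:
  fixes F A :: "'a::{real_normed_algebra,banach}"
  shows "summable (\<lambda>m. fer_coeff m *\<^sub>R (commutator F ^^ Suc m) A)"
  using summable_norm_cancel[OF summable_norm_commutator_series[OF abs_fer_coeff_le]]
  by (simp only: funpow_Suc_right o_apply)

lemma fer_series_eq_sum_commutator_series:
  fixes F A :: "'a::{real_normed_algebra_1,banach}"
  shows "(\<Sum>k. (1 / fact k) *\<^sub>R (commutator (- F) ^^ k) A) +
      (\<Sum>k. (1 / fact (Suc k)) *\<^sub>R (commutator (- F) ^^ k) (- A)) = fer_series F A"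
proof -
  define g where "g k = ((-1) ^ k * (1 / fact k - 1 / fact (Suc k))) *\<^sub>R (commutator F ^^ k) A" for k
  have coeff: "\<bar>1 / fact (Suc k)\<bar> \<le> 1 / (fact k :: real)" for k
    by (simp add: frac_le fact_mono)
  have s1: "summable (\<lambda>k. (1 / fact k) *\<^sub>R (commutator (- F) ^^ k) A)"
    by (rule summable_norm_cancel, rule summable_norm_commutator_series) simp
  have s2: "summable (\<lambda>k. (1 / fact (Suc k)) *\<^sub>R (commutator (- F) ^^ k) (- A))"
    by (rule summable_norm_cancel, rule summable_norm_commutator_series[OF coeff])
  have "(1 / fact k) *\<^sub>R (commutator (- F) ^^ k) A +
      (1 / fact (Suc k)) *\<^sub>R (commutator (- F) ^^ k) (- A) = g k" for k
    unfolding g_def commutator_iter_minus_left commutator_iter_minus_right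
    by (simp add: algebra_simps)
  then have "(\<Sum>k. (1 / fact k) *\<^sub>R (commutator (- F) ^^ k) A) +
      (\<Sum>k. (1 / fact (Suc k)) *\<^sub>R (commutator (- F) ^^ k) (- A)) = suminf g"
    and "summable g"
    using suminf_add[OF s1 s2] summable_add[OF s1 s2] by simp_all
  moreover have "g (Suc m) = fer_coeff m *\<^sub>R (commutator F ^^ Suc m) A" for m
    by (simp add: g_def fer_coeff_eq)
  ultimately show ?thesis
    unfolding fer_series_def using suminf_split_head[of g] by (simp add: g_def)
qed

lemma has_vector_derivative_exp_minus_mult:
  fixes F A V :: "real \<Rightarrow> 'a::{real_normed_algebra_1,banach}"
  assumes F: "(F has_vector_derivative A t) (at t)"
    and V: "(V has_vector_derivative A t * V t) (at t)"
  shows "((\<lambda>s. exp (- F s) * V s) has_vector_derivative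
           fer_series (F t) (A t) * (exp (- F t) * V t)) (at t)"
proof -
  define D where "D = exp_deriv (- F t) (- A t)"
  have "((\<lambda>s. exp (- F s)) has_derivative (\<lambda>h. exp_deriv (- F t) (h *\<^sub>R (- A t)))) (at t)"
    using has_derivative_compose[OF has_derivative_minus[OF F[unfolded has_vector_derivative_def]]
        has_derivative_exp_alg] by simp
  moreover have "exp_deriv (- F t) (h *\<^sub>R (- A t)) = h *\<^sub>R D" for h
    unfolding D_def
    by (rule linear_scale[OF bounded_linear.linear[OF has_derivative_bounded_linear[OF has_derivative_exp_alg]]])
  ultimately have E: "((\<lambda>s. exp (- F s)) has_vector_derivative D) (at t)"
    by (simp add: has_vector_derivative_def)
  have key: "exp (- F t) * (A t * V t) + D * V t =
      ((\<Sum>k. (1 / fact k) *\<^sub>R (commutator (- F t) ^^ k) (A t)) +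
       (\<Sum>k. (1 / fact (Suc k)) *\<^sub>R (commutator (- F t) ^^ k) (- A t))) * (exp (- F t) * V t)"
    using exp_mult_eq_commutator_series[of "- F t" "A t"]
    by (simp add: D_def exp_deriv_def mult.assoc[symmetric] distrib_right)
  show ?thesis
    using has_vector_derivative_mult[OF E V] unfolding key fer_series_eq_sum_commutator_series .
qed

lemma infsum_UNIV_eq_suminf:
  fixes f :: "nat \<Rightarrow> 'a::banach"
  assumes "summable (\<lambda>n. norm (f n))"
  shows "infsum f UNIV = suminf f"
  using norm_summable_imp_has_sum[OF assms summable_sums[OF summable_norm_cancel[OF assms]]]
  by (rule infsumI)

lemma abs_summable_on_Times_of_summable_norm:
  fixes x :: "nat \<Rightarrow> nat \<Rightarrow> 'a::banach"
  assumes row: "\<And>m. summable (\<lambda>n. norm (x m n))"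
    and tot: "summable (\<lambda>m. \<Sum>n. norm (x m n))"
  shows "(\<lambda>p. norm (case p of (m, n) \<Rightarrow> x m n)) summable_on UNIV \<times> UNIV"
proof -
  define X where "X = (\<lambda>(m, n). x m n)"
  have "(\<lambda>p. norm (X p)) summable_on UNIV \<times> UNIV"
  proof (rule iffD2[OF Infinite_Sum.abs_summable_on_Sigma_iff], intro conjI ballI)
    show "(\<lambda>n. norm (X (m, n))) summable_on UNIV" for m
      unfolding X_def by (rule norm_summable_imp_summable_on) (simp add: row)
    have eq: "infsum (\<lambda>n. norm (x m n)) UNIV = (\<Sum>n. norm (x m n))" for m
      by (rule infsum_UNIV_eq_suminf) (simp add: row)
    have tot': "summable (\<lambda>m. norm (\<Sum>n. norm (x m n)))"
      using tot by (simp add: suminf_nonneg row)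
    show "(\<lambda>m. norm (infsum (\<lambda>n. norm (X (m, n))) UNIV)) summable_on UNIV"
      unfolding X_def using eq norm_summable_imp_summable_on[OF tot'] by (simp add: suminf_nonneg row)
  qed
  then show ?thesis by (simp add: X_def)
qed

lemma suminf_swap_norm_summable:
  fixes x :: "nat \<Rightarrow> nat \<Rightarrow> 'a::banach"
  assumes row: "\<And>m. summable (\<lambda>n. norm (x m n))"
    and tot: "summable (\<lambda>m. \<Sum>n. norm (x m n))"
  shows "(\<Sum>m. \<Sum>n. x m n) = (\<Sum>n. \<Sum>m. x m n)"
    and "\<And>n. summable (\<lambda>m. norm (x m n))"
    and "summable (\<lambda>n. \<Sum>m. norm (x m n))"
proof -
  note abs = abs_summable_on_Times_of_summable_norm[OF row tot]
  then have "(\<lambda>p. norm (case p of (n, m) \<Rightarrow> x m n)) summable_on UNIV \<times> UNIV"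
    unfolding summable_on_swap[of "\<lambda>p. norm (case p of (m, n) \<Rightarrow> x m n)"]
    by (simp add: case_prod_unfold)
  note swapped = iffD1[OF Infinite_Sum.abs_summable_on_Sigma_iff this]
  have col: "\<And>n. (\<lambda>m. norm (x m n)) summable_on UNIV"
    and col_sum: "(\<lambda>n. norm (infsum (\<lambda>m. norm (x m n)) UNIV)) summable_on UNIV"
    using swapped by auto
  show col': "summable (\<lambda>m. norm (x m n))" for n
    by (rule summable_on_imp_summable[OF col])
  have col_sum': "summable (\<lambda>n. norm (\<Sum>m. norm (x m n)))"
    using summable_on_imp_summable[OF col_sum] by (simp add: infsum_UNIV_eq_suminf col')
  then show "summable (\<lambda>n. \<Sum>m. norm (x m n))"
    by (simp add: suminf_nonneg col')
  have "summable (\<lambda>m. norm (\<Sum>n. x m n))"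
    by (rule summable_comparison_test'[OF tot]) (use summable_norm[OF row] in \<open>auto simp: suminf_nonneg row\<close>)
  moreover have "summable (\<lambda>n. norm (\<Sum>m. x m n))"
    by (rule summable_comparison_test'[OF col_sum']) (use summable_norm[OF col'] in \<open>auto simp: suminf_nonneg col'\<close>)
  moreover have "infsum (\<lambda>m. infsum (x m) UNIV) UNIV = infsum (\<lambda>n. infsum (\<lambda>m. x m n) UNIV) UNIV"
    using infsum_swap_banach[of x UNIV UNIV] abs_summable_summable[OF abs] by simp
  ultimately show "(\<Sum>m. \<Sum>n. x m n) = (\<Sum>n. \<Sum>m. x m n)"
    by (simp add: infsum_UNIV_eq_suminf row col')
qed

section \<open>Power series with weighted coefficient norms\<close>

text \<open>This norm bounds \<open>f\<close> on the
  interval and is submultiplicative for Cauchy products.\<close>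

definition has_power_series :: "real \<Rightarrow> (nat \<Rightarrow> 'a::real_normed_vector) \<Rightarrow> (real \<Rightarrow> 'a) \<Rightarrow> bool" where
  "has_power_series r a f \<longleftrightarrow>
     summable (\<lambda>n. r ^ n * norm (a n)) \<and> (\<forall>t. \<bar>t\<bar> < r \<longrightarrow> f t = (\<Sum>n. t ^ n *\<^sub>R a n))"

definition coeff_norm :: "real \<Rightarrow> (nat \<Rightarrow> 'a::real_normed_vector) \<Rightarrow> real" where
  "coeff_norm r a = (\<Sum>n. r ^ n * norm (a n))"

definition vanishes_below :: "nat \<Rightarrow> (nat \<Rightarrow> 'a::zero) \<Rightarrow> bool" where
  "vanishes_below q a \<longleftrightarrow> (\<forall>n<q. a n = 0)"

lemma summable_coeff_norm: "has_power_series r a f \<Longrightarrow> summable (\<lambda>n. r ^ n * norm (a n))"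
  by (simp add: has_power_series_def)

lemma summable_norm_power_series:
  assumes "has_power_series r a f" "\<bar>t\<bar> < r"
  shows "summable (\<lambda>n. norm (t ^ n *\<^sub>R a n))"
proof (rule summable_comparison_test'[OF summable_coeff_norm[OF assms(1)]])
  fix n
  have "\<bar>t\<bar> ^ n \<le> r ^ n" by (rule power_mono) (use assms(2) in auto)
  then show "norm (norm (t ^ n *\<^sub>R a n)) \<le> r ^ n * norm (a n)"
    by (simp add: power_abs mult_right_mono)
qed

lemma has_power_series_sums:
  fixes a :: "nat \<Rightarrow> 'a::banach"
  assumes "has_power_series r a f" "\<bar>t\<bar> < r"
  shows "(\<lambda>n. t ^ n *\<^sub>R a n) sums f t"
  using summable_sums[OF summable_norm_cancel[OF summable_norm_power_series[OF assms]]] assms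
  by (simp add: has_power_series_def)

lemma coeff_norm_nonneg: "0 \<le> r \<Longrightarrow> has_power_series r a f \<Longrightarrow> 0 \<le> coeff_norm r a"
  unfolding coeff_norm_def by (auto intro: suminf_nonneg summable_coeff_norm)

lemma norm_le_coeff_norm:
  fixes a :: "nat \<Rightarrow> 'a::banach"
  assumes r: "0 < r" and f: "has_power_series r a f" and a: "vanishes_below q a" and t: "\<bar>t\<bar> < r"
  shows "norm (f t) \<le> (\<bar>t\<bar> / r) ^ q * coeff_norm r a"
proof -
  have "norm (t ^ n *\<^sub>R a n) \<le> (\<bar>t\<bar> / r) ^ q * (r ^ n * norm (a n))" for n
  proof (cases "n < q")
    case False
    have "\<bar>t\<bar> ^ n = (\<bar>t\<bar> / r) ^ n * r ^ n" using r by (simp add: power_divide)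
    also have "\<dots> \<le> (\<bar>t\<bar> / r) ^ q * r ^ n"
      by (intro mult_right_mono power_decreasing) (use False r t in auto)
    finally have "\<bar>t\<bar> ^ n * norm (a n) \<le> (\<bar>t\<bar> / r) ^ q * r ^ n * norm (a n)"
      by (rule mult_right_mono) simp
    then show ?thesis by (simp add: power_abs mult.assoc)
  qed (use a in \<open>simp add: vanishes_below_def\<close>)
  then have "(\<Sum>n. norm (t ^ n *\<^sub>R a n)) \<le> (\<Sum>n. (\<bar>t\<bar> / r) ^ q * (r ^ n * norm (a n)))"
    by (intro suminf_le summable_norm_power_series[OF f t] summable_mult summable_coeff_norm[OF f])
  then show ?thesis
    using summable_norm[OF summable_norm_power_series[OF f t]] sums_unique[OF has_power_series_sums[OF f t]]
      suminf_mult[OF summable_coeff_norm[OF f]]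
    by (simp add: coeff_norm_def)
qed

lemma has_power_series_scaleR:
  fixes a :: "nat \<Rightarrow> 'a::banach"
  assumes f: "has_power_series r a f"
  shows "has_power_series r (\<lambda>n. c *\<^sub>R a n) (\<lambda>t. c *\<^sub>R f t)"
    and "coeff_norm r (\<lambda>n. c *\<^sub>R a n) = \<bar>c\<bar> * coeff_norm r a"
proof -
  have norm_eq: "(\<lambda>n. r ^ n * norm (c *\<^sub>R a n)) = (\<lambda>n. \<bar>c\<bar> * (r ^ n * norm (a n)))"
    by (simp add: fun_eq_iff algebra_simps)
  have "(\<lambda>n. t ^ n *\<^sub>R c *\<^sub>R a n) sums (c *\<^sub>R f t)" if "\<bar>t\<bar> < r" for t
    using sums_scaleR_right[OF has_power_series_sums[OF f that], of c] by (simp add: algebra_simps)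
  then show "has_power_series r (\<lambda>n. c *\<^sub>R a n) (\<lambda>t. c *\<^sub>R f t)"
    unfolding has_power_series_def norm_eq
    using summable_mult[OF summable_coeff_norm[OF f]] by (simp add: sums_iff)
  show "coeff_norm r (\<lambda>n. c *\<^sub>R a n) = \<bar>c\<bar> * coeff_norm r a"
    unfolding coeff_norm_def norm_eq by (rule suminf_mult[OF summable_coeff_norm[OF f]])
qed

lemma summable_coeff_norm_of_summable:
  fixes c :: "nat \<Rightarrow> 'a::real_normed_vector"
  assumes s: "summable (\<lambda>n. s ^ n *\<^sub>R c n)" and r: "0 \<le> r" "r < \<bar>s\<bar>"
  shows "summable (\<lambda>n. r ^ n * norm (c n))"
proof -
  have "Bseq (\<lambda>n. s ^ n *\<^sub>R c n)"
    using summable_LIMSEQ_zero[OF s] by (rule convergent_imp_Bseq[OF convergentI])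
  then obtain B where B: "\<And>n. norm (s ^ n *\<^sub>R c n) \<le> B"
    unfolding Bseq_def by blast
  have bound: "r ^ n * norm (c n) \<le> B * (r / \<bar>s\<bar>) ^ n" for n
  proof -
    have "s \<noteq> 0" using r by auto
    then have "r ^ n * norm (c n) = (r / \<bar>s\<bar>) ^ n * norm (s ^ n *\<^sub>R c n)"
      by (simp add: power_divide power_abs)
    also have "\<dots> \<le> (r / \<bar>s\<bar>) ^ n * B"
      using B r by (intro mult_left_mono) auto
    finally show ?thesis by (simp add: mult.commute)
  qed
  have "summable (\<lambda>n. B * (r / \<bar>s\<bar>) ^ n)"
    using r by (intro summable_mult summable_geometric) simp
  then show ?thesis
    by (rule summable_comparison_test') (use bound r in simp)
qed

lemma has_power_series_of_real_analytic:
  assumes "real_analytic f"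
  shows "\<exists>r c. 0 < r \<and> has_power_series r c f"
proof -
  obtain r0 c where r0: "0 < r0" and f: "\<And>t. \<bar>t\<bar> < r0 \<Longrightarrow> (\<lambda>n. t ^ n *\<^sub>R c n) sums f t"
    using assms unfolding real_analytic_def by (metis diff_zero)
  have "summable (\<lambda>n. (r0 / 2) ^ n * norm (c n))"
    using r0 by (intro summable_coeff_norm_of_summable[OF sums_summable[OF f[of "3 * r0 / 4"]]]) auto
  moreover have "f t = (\<Sum>n. t ^ n *\<^sub>R c n)" if "\<bar>t\<bar> < r0 / 2" for t
    using that r0 by (intro sums_unique f) simp
  ultimately show ?thesis
    using r0 by (intro exI[of _ "r0 / 2"] exI[of _ c]) (simp add: has_power_series_def)
qed

lemma has_power_series_bounded_linear:
  fixes a :: "nat \<Rightarrow> 'a::banach" and L :: "'a \<Rightarrow> 'b::banach"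
  assumes L: "bounded_linear L" and f: "has_power_series r a f" and r: "0 \<le> r"
  shows "has_power_series r (\<lambda>n. L (a n)) (\<lambda>t. L (f t))"
proof -
  obtain K where K: "\<And>x. norm (L x) \<le> norm x * K"
    using bounded_linear.bounded[OF L] by blast
  have "summable (\<lambda>n. r ^ n * norm (L (a n)))"
  proof (rule summable_comparison_test'[OF summable_mult2[OF summable_coeff_norm[OF f], of K]])
    show "norm (r ^ n * norm (L (a n))) \<le> r ^ n * norm (a n) * K" for n
      using mult_left_mono[OF K[of "a n"], of "r ^ n"] r by (simp add: mult.assoc)
  qed
  moreover have "L (f t) = (\<Sum>n. t ^ n *\<^sub>R L (a n))" if "\<bar>t\<bar> < r" for t
    using bounded_linear.suminf[OF L summable_norm_cancel[OF summable_norm_power_series[OF f that]]]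
      f that by (simp add: has_power_series_def linear_scale[OF bounded_linear.linear[OF L]])
  ultimately show ?thesis
    by (simp add: has_power_series_def)
qed

lemma has_power_series_diff:
  fixes a b :: "nat \<Rightarrow> 'a::banach"
  assumes f: "has_power_series r a f" and g: "has_power_series r b g" and r: "0 \<le> r"
  shows "has_power_series r (\<lambda>n. a n - b n) (\<lambda>t. f t - g t)"
    and "coeff_norm r (\<lambda>n. a n - b n) \<le> coeff_norm r a + coeff_norm r b"
proof -
  note sa = summable_coeff_norm[OF f] and sb = summable_coeff_norm[OF g]
  have le: "r ^ n * norm (a n - b n) \<le> r ^ n * norm (a n) + r ^ n * norm (b n)" for n
    using mult_left_mono[OF norm_triangle_ineq4[of "a n" "b n"], of "r ^ n"] r
    by (simp add: algebra_simps)
  have s: "summable (\<lambda>n. r ^ n * norm (a n - b n))"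
    by (rule summable_comparison_test'[OF summable_add[OF sa sb]]) (use le r in auto)
  have "f t - g t = (\<Sum>n. t ^ n *\<^sub>R (a n - b n))" if "\<bar>t\<bar> < r" for t
    using sums_unique[OF sums_diff[OF has_power_series_sums[OF f that] has_power_series_sums[OF g that]]]
    by (simp add: algebra_simps)
  with s show "has_power_series r (\<lambda>n. a n - b n) (\<lambda>t. f t - g t)"
    by (simp add: has_power_series_def)
  show "coeff_norm r (\<lambda>n. a n - b n) \<le> coeff_norm r a + coeff_norm r b"
    unfolding coeff_norm_def using suminf_le[OF le s summable_add[OF sa sb]] suminf_add[OF sa sb]
    by simp
qed

definition coeff_mult :: "(nat \<Rightarrow> 'a::real_normed_algebra) \<Rightarrow> (nat \<Rightarrow> 'a) \<Rightarrow> nat \<Rightarrow> 'a" where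
  "coeff_mult a b n = (\<Sum>i\<le>n. a i * b (n - i))"

lemma has_power_series_mult:
  fixes a b :: "nat \<Rightarrow> 'a::{real_normed_algebra,banach}"
  assumes f: "has_power_series r a f" and g: "has_power_series r b g" and r: "0 < r"
  shows "has_power_series r (coeff_mult a b) (\<lambda>t. f t * g t)"
    and "coeff_norm r (coeff_mult a b) \<le> coeff_norm r a * coeff_norm r b"
proof -
  define A where "A n = r ^ n * norm (a n)" for n
  define B where "B n = r ^ n * norm (b n)" for n
  have C: "(\<lambda>n. \<Sum>i\<le>n. A i * B (n - i)) sums (suminf A * suminf B)"
    using Cauchy_product_sums[of A B] summable_coeff_norm[OF f] summable_coeff_norm[OF g] r
    by (simp add: A_def[abs_def] B_def[abs_def])
  have le: "r ^ n * norm (coeff_mult a b n) \<le> (\<Sum>i\<le>n. A i * B (n - i))" for n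
  proof -
    have "norm (coeff_mult a b n) \<le> (\<Sum>i\<le>n. norm (a i) * norm (b (n - i)))"
      unfolding coeff_mult_def by (rule order_trans[OF norm_sum sum_mono[OF norm_mult_ineq]])
    then have "r ^ n * norm (coeff_mult a b n) \<le> (\<Sum>i\<le>n. r ^ n * (norm (a i) * norm (b (n - i))))"
      using r by (simp add: sum_distrib_left[symmetric] mult_left_mono)
    also have "\<dots> = (\<Sum>i\<le>n. A i * B (n - i))"
      by (intro sum.cong refl) (simp add: A_def B_def power_add[symmetric] algebra_simps)
    finally show ?thesis .
  qed
  have s: "summable (\<lambda>n. r ^ n * norm (coeff_mult a b n))"
    by (rule summable_comparison_test'[OF sums_summable[OF C]]) (use le r in auto)
  have "(\<lambda>n. \<Sum>i\<le>n. (t ^ i *\<^sub>R a i) * (t ^ (n - i) *\<^sub>R b (n - i))) sums (f t * g t)"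
    if t: "\<bar>t\<bar> < r" for t
    using Cauchy_product_sums[OF summable_norm_power_series[OF f t] summable_norm_power_series[OF g t]]
      sums_unique[OF has_power_series_sums[OF f t]] sums_unique[OF has_power_series_sums[OF g t]]
    by simp
  moreover have "(\<Sum>i\<le>n. (t ^ i *\<^sub>R a i) * (t ^ (n - i) *\<^sub>R b (n - i))) = t ^ n *\<^sub>R coeff_mult a b n"
    for t n unfolding coeff_mult_def scaleR_sum_right
    by (intro sum.cong refl) (simp add: power_add[symmetric])
  ultimately show "has_power_series r (coeff_mult a b) (\<lambda>t. f t * g t)"
    using s by (simp add: has_power_series_def sums_iff)
  show "coeff_norm r (coeff_mult a b) \<le> coeff_norm r a * coeff_norm r b"
    using suminf_le[OF le s sums_summable[OF C]] sums_unique[OF C]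
    by (simp add: coeff_norm_def A_def[abs_def] B_def[abs_def])
qed

lemma oint_eq_antiderivative:
  fixes f G :: "real \<Rightarrow> 'a::banach"
  assumes G: "\<And>s. \<bar>s\<bar> < r \<Longrightarrow> (G has_vector_derivative f s) (at s)"
    and G0: "G 0 = 0" and t: "\<bar>t\<bar> < r"
  shows "oint f t = G t"
proof -
  have D: "(G has_vector_derivative f s) (at s within S)" if "\<bar>s\<bar> \<le> \<bar>t\<bar>" for s S
    using that t by (intro has_vector_derivative_at_within[OF G]) simp
  show ?thesis
  proof (cases "0 \<le> t")
    case True
    have "(f has_integral (G t - G 0)) {0..t}"
      by (rule fundamental_theorem_of_calculus[OF True], rule D) (use True in simp)
    then show ?thesis using True G0 by (simp add: oint_def integral_unique)
  next
    case False
    have "(f has_integral (G 0 - G t)) {t..0}"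
      by (rule fundamental_theorem_of_calculus, use False in simp, rule D) (use False in simp)
    then show ?thesis using False G0 by (simp add: oint_def integral_unique)
  qed
qed

definition coeff_integral :: "(nat \<Rightarrow> 'a::real_vector) \<Rightarrow> nat \<Rightarrow> 'a" where
  "coeff_integral a n = (case n of 0 \<Rightarrow> 0 | Suc m \<Rightarrow> a m /\<^sub>R real (Suc m))"

lemma coeff_integral_0 [simp]: "coeff_integral a 0 = 0"
  and coeff_integral_Suc [simp]: "coeff_integral a (Suc m) = a m /\<^sub>R real (Suc m)"
  by (simp_all add: coeff_integral_def)

lemma coeff_norm_coeff_integral:
  fixes a :: "nat \<Rightarrow> 'a::real_normed_vector"
  assumes r: "0 < r" and a: "summable (\<lambda>n. r ^ n * norm (a n))"
  shows "summable (\<lambda>n. r ^ n * norm (coeff_integral a n))"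
    and "coeff_norm r (coeff_integral a) \<le> r * coeff_norm r a"
proof -
  have le: "r ^ Suc m * norm (coeff_integral a (Suc m)) \<le> r * (r ^ m * norm (a m))" for m
  proof -
    have "r ^ Suc m * norm (coeff_integral a (Suc m)) = r * (r ^ m * norm (a m)) / real (Suc m)"
      by (simp add: divide_inverse)
    also have "\<dots> \<le> r * (r ^ m * norm (a m)) / 1"
      by (intro divide_left_mono) (use r in auto)
    finally show ?thesis by simp
  qed
  have s: "summable (\<lambda>m. r ^ Suc m * norm (coeff_integral a (Suc m)))"
    by (rule summable_comparison_test'[OF summable_mult[OF a, of r]]) (use le r in auto)
  then show "summable (\<lambda>n. r ^ n * norm (coeff_integral a n))"
    by (subst summable_Suc_iff[symmetric])
  have "coeff_norm r (coeff_integral a) = (\<Sum>m. r ^ Suc m * norm (coeff_integral a (Suc m)))"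
    using suminf_split_head[OF \<open>summable (\<lambda>n. r ^ n * norm (coeff_integral a n))\<close>]
    by (simp add: coeff_norm_def)
  also have "\<dots> \<le> (\<Sum>m. r * (r ^ m * norm (a m)))"
    by (rule suminf_le[OF le s summable_mult[OF a]])
  also have "\<dots> = r * coeff_norm r a"
    unfolding coeff_norm_def by (rule suminf_mult[OF a])
  finally show "coeff_norm r (coeff_integral a) \<le> r * coeff_norm r a" .
qed

lemma has_vector_derivative_integral_series:
  fixes a :: "nat \<Rightarrow> 'a::banach"
  assumes r: "0 < r" and f: "has_power_series r a f" and t: "\<bar>t\<bar> < r"
  shows "((\<lambda>s. \<Sum>n. s ^ n *\<^sub>R coeff_integral a n) has_vector_derivative f t) (at t)"
proof -
  define d where "d n s = (real n * s ^ (n - 1)) *\<^sub>R coeff_integral a n" for n and s :: real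
  define c where "c n = (case n of 0 \<Rightarrow> 0 | Suc m \<Rightarrow> r ^ m * norm (a m))" for n
  have d_0: "d 0 s = 0" and d_Suc: "d (Suc m) s = s ^ m *\<^sub>R a m" for m s
    by (simp_all add: d_def)
  have "((\<lambda>s. \<Sum>n. s ^ n *\<^sub>R coeff_integral a n) has_derivative (\<lambda>h. \<Sum>n. h *\<^sub>R d n t)) (at t)"
  proof (rule has_derivative_series_Mtest(2)[where S="ball 0 r" and a=0 and c=c])
    fix n and s :: real
    show "((\<lambda>s. s ^ n *\<^sub>R coeff_integral a n) has_derivative (\<lambda>h. h *\<^sub>R d n s)) (at s)"
      using has_vector_derivative_scaleR[OF DERIV_pow has_vector_derivative_const]
      by (simp add: d_def has_vector_derivative_def)
    fix h assume "s \<in> ball 0 r"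
    then have "norm (d n s) \<le> c n"
      by (cases n) (simp_all add: d_0 d_Suc c_def power_abs mult_right_mono power_mono)
    then show "norm (h *\<^sub>R d n s) \<le> c n * norm h"
      by (simp add: mult.commute mult_left_mono)
  next
    have "summable (\<lambda>m. c (Suc m))"
      using summable_coeff_norm[OF f] by (simp add: c_def)
    then show "summable c"
      by (simp only: summable_Suc_iff)
  next
    have "(\<lambda>n. (0::real) ^ n *\<^sub>R coeff_integral a n) = (\<lambda>n. 0)"
      by (simp add: fun_eq_iff power_0_left)
    then show "summable (\<lambda>n. (0::real) ^ n *\<^sub>R coeff_integral a n)"
      by simp
  qed (use r t in auto)
  moreover have d_sums: "(\<lambda>n. d n t) sums f t"
    using has_power_series_sums[OF f t] sums_Suc_iff[of "\<lambda>n. d n t"] by (simp add: d_0 d_Suc)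
  have "(\<lambda>h. \<Sum>n. h *\<^sub>R d n t) = (\<lambda>h. h *\<^sub>R f t)"
    by (rule ext) (rule sums_unique[OF sums_scaleR_right[OF d_sums], symmetric])
  ultimately show ?thesis
    by (simp add: has_vector_derivative_def)
qed

lemma has_power_series_oint:
  fixes a :: "nat \<Rightarrow> 'a::banach"
  assumes r: "0 < r" and f: "has_power_series r a f"
  shows "has_power_series r (coeff_integral a) (oint f)"
    and "coeff_norm r (coeff_integral a) \<le> r * coeff_norm r a"
    and "\<And>t. \<bar>t\<bar> < r \<Longrightarrow> (oint f has_vector_derivative f t) (at t)"
proof -
  define G where "G t = (\<Sum>n. t ^ n *\<^sub>R coeff_integral a n)" for t
  have G: "\<And>s. \<bar>s\<bar> < r \<Longrightarrow> (G has_vector_derivative f s) (at s)"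
    unfolding G_def[abs_def] by (rule has_vector_derivative_integral_series[OF r f])
  have "(\<lambda>n. (0::real) ^ n *\<^sub>R coeff_integral a n) = (\<lambda>n. 0)"
    by (simp add: fun_eq_iff power_0_left)
  then have "G 0 = 0"
    by (simp add: G_def)
  note oint_G = oint_eq_antiderivative[OF G this]
  show "has_power_series r (coeff_integral a) (oint f)"
    unfolding has_power_series_def
    using oint_G coeff_norm_coeff_integral(1)[OF r summable_coeff_norm[OF f]] by (simp add: G_def)
  show "coeff_norm r (coeff_integral a) \<le> r * coeff_norm r a"
    by (rule coeff_norm_coeff_integral(2)[OF r summable_coeff_norm[OF f]])
  show "(oint f has_vector_derivative f t) (at t)" if t: "\<bar>t\<bar> < r" for t
    by (rule has_vector_derivative_transform_within_open[OF G[OF t], where S="ball 0 r"])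
      (use t oint_G in auto)
qed

lemma suminf_has_power_series_eq:
  fixes a :: "nat \<Rightarrow> nat \<Rightarrow> 'a::banach"
  assumes f: "\<And>m. has_power_series r (a m) (f m)" and s: "summable (\<lambda>m. coeff_norm r (a m))"
    and col: "\<And>n. summable (\<lambda>m. a m n)" and t: "\<bar>t\<bar> < r"
  shows "(\<Sum>m. f m t) = (\<Sum>n. t ^ n *\<^sub>R (\<Sum>m. a m n))"
proof -
  define x where "x m n = t ^ n *\<^sub>R a m n" for m n
  have x_row: "summable (\<lambda>n. norm (x m n))" for m
    unfolding x_def by (rule summable_norm_power_series[OF f t])
  have "norm (x m n) \<le> r ^ n * norm (a m n)" for m n
    using power_mono[of "\<bar>t\<bar>" r n] t by (simp add: x_def power_abs mult_right_mono)
  then have "(\<Sum>n. norm (x m n)) \<le> coeff_norm r (a m)" for m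
    unfolding coeff_norm_def by (intro suminf_le x_row summable_coeff_norm[OF f])
  then have x_total: "summable (\<lambda>m. \<Sum>n. norm (x m n))"
    by (intro summable_comparison_test'[OF s]) (simp add: suminf_nonneg x_row)
  have "(\<Sum>m. f m t) = (\<Sum>m. \<Sum>n. x m n)"
    using f t by (simp add: has_power_series_def x_def)
  also have "\<dots> = (\<Sum>n. \<Sum>m. x m n)"
    by (rule suminf_swap_norm_summable(1)[OF x_row x_total])
  also have "\<dots> = (\<Sum>n. t ^ n *\<^sub>R (\<Sum>m. a m n))"
    unfolding x_def using suminf_scaleR_right[OF col] by simp
  finally show ?thesis .
qed

lemma has_power_series_suminf:
  fixes a :: "nat \<Rightarrow> nat \<Rightarrow> 'a::banach"
  assumes r: "0 < r" and f: "\<And>m. has_power_series r (a m) (f m)"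
    and s: "summable (\<lambda>m. coeff_norm r (a m))"
  shows "has_power_series r (\<lambda>n. \<Sum>m. a m n) (\<lambda>t. \<Sum>m. f m t)"
    and "coeff_norm r (\<lambda>n. \<Sum>m. a m n) \<le> (\<Sum>m. coeff_norm r (a m))"
proof -
  define y where "y m n = r ^ n * norm (a m n)" for m n
  have y0: "0 \<le> y m n" for m n using r by (simp add: y_def)
  have row: "summable (\<lambda>n. norm (y m n))" for m
    using summable_coeff_norm[OF f] y0 by (simp add: y_def[abs_def])
  have total: "summable (\<lambda>m. \<Sum>n. norm (y m n))"
    using s y0 by (simp add: coeff_norm_def y_def[abs_def])
  note swap = suminf_swap_norm_summable[of y, OF row total]
  have col: "summable (\<lambda>m. norm (a m n))" for n
    using summable_mult[OF swap(2)[of n], of "inverse (r ^ n)"] y0 r by (simp add: y_def field_simps)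
  have total': "summable (\<lambda>n. \<Sum>m. r ^ n * norm (a m n))"
    using swap(3) y0 by (simp add: y_def)
  have le: "r ^ n * norm (\<Sum>m. a m n) \<le> (\<Sum>m. r ^ n * norm (a m n))" for n
    using summable_norm[OF col] r by (simp add: suminf_mult[OF col] mult_left_mono)
  have sb: "summable (\<lambda>n. r ^ n * norm (\<Sum>m. a m n))"
    by (rule summable_comparison_test'[OF total']) (use le r in auto)
  then show "has_power_series r (\<lambda>n. \<Sum>m. a m n) (\<lambda>t. \<Sum>m. f m t)"
    using suminf_has_power_series_eq[OF f s summable_norm_cancel[OF col]]
    by (simp add: has_power_series_def)
  have "coeff_norm r (\<lambda>n. \<Sum>m. a m n) \<le> (\<Sum>n. \<Sum>m. r ^ n * norm (a m n))"
    unfolding coeff_norm_def by (rule suminf_le[OF le sb total'])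
  also have "\<dots> = (\<Sum>m. coeff_norm r (a m))"
    using swap(1) by (simp add: coeff_norm_def y_def)
  finally show "coeff_norm r (\<lambda>n. \<Sum>m. a m n) \<le> (\<Sum>m. coeff_norm r (a m))" .
qed

lemma vanishes_below_coeff_mult:
  assumes "vanishes_below p a" "vanishes_below q b"
  shows "vanishes_below (p + q) (coeff_mult a b)"
  unfolding vanishes_below_def coeff_mult_def
proof (intro allI impI sum.neutral ballI)
  fix n i assume "n < p + q" "i \<in> {..n}"
  then have "i < p \<or> n - i < q" by auto
  then show "a i * b (n - i) = 0"
    using assms by (auto simp: vanishes_below_def)
qed

lemma vanishes_below_coeff_integral:
  "vanishes_below q a \<Longrightarrow> vanishes_below (Suc q) (coeff_integral a)"
  unfolding vanishes_below_def by (auto simp: coeff_integral_def split: nat.splits)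

definition coeff_commutator :: "(nat \<Rightarrow> 'a::real_normed_algebra) \<Rightarrow> (nat \<Rightarrow> 'a) \<Rightarrow> nat \<Rightarrow> 'a" where
  "coeff_commutator a b n = coeff_mult a b n - coeff_mult b a n"

lemma vanishes_below_coeff_commutator_right:
  "vanishes_below q b \<Longrightarrow> vanishes_below q (coeff_commutator a b)"
  using vanishes_below_coeff_mult[of 0 a q b] vanishes_below_coeff_mult[of q b 0 a]
  by (simp add: vanishes_below_def coeff_commutator_def)

text \<open>The heart of the order doubling: the lowest-order terms of \<open>[\<integral>A, A]\<close> cancel, since both
  come from the same leading coefficient of \<open>A\<close>.\<close>

lemma vanishes_below_coeff_commutator_integral:
  fixes a :: "nat \<Rightarrow> 'a::real_normed_algebra"
  assumes a: "vanishes_below q a"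
  shows "vanishes_below (2 * q + 2) (coeff_commutator (coeff_integral a) a)"
  unfolding vanishes_below_def
proof (intro allI impI)
  fix n :: nat assume n: "n < 2 * q + 2"
  have Ia: "vanishes_below (Suc q) (coeff_integral a)"
    by (rule vanishes_below_coeff_integral[OF a])
  have comm: "coeff_integral a i * a (n - i) = a (n - i) * coeff_integral a i" if "i \<le> n" for i
  proof (cases "i \<le> q \<or> n - i < q")
    case True
    then show ?thesis using a Ia by (auto simp: vanishes_below_def)
  next
    case False
    then have "i = Suc q" "n - i = q" using n that by auto
    then show ?thesis by (simp add: mult_scaleR_left mult_scaleR_right)
  qed
  have "coeff_mult a (coeff_integral a) n = (\<Sum>i=0..n. a (n - i) * coeff_integral a (n - (n - i)))"
    unfolding coeff_mult_def atMost_atLeast0 by (rule sum.atLeastAtMost_rev[where n=0 and m=n, simplified])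
  also have "\<dots> = coeff_mult (coeff_integral a) a n"
    unfolding coeff_mult_def atMost_atLeast0 by (intro sum.cong refl) (simp add: comm)
  finally show "coeff_commutator (coeff_integral a) a n = 0"
    by (simp add: coeff_commutator_def)
qed

lemma vanishes_below_coeff_commutator_iter:
  fixes a :: "nat \<Rightarrow> 'a::real_normed_algebra"
  assumes "vanishes_below q a"
  shows "vanishes_below (2 * q + 2) ((coeff_commutator (coeff_integral a) ^^ Suc m) a)"
proof (induction m)
  case 0
  show ?case using vanishes_below_coeff_commutator_integral[OF assms] by simp
next
  case (Suc m)
  show ?case
    using vanishes_below_coeff_commutator_right[OF Suc] by simp
qed

lemma has_power_series_commutator:
  fixes a b :: "nat \<Rightarrow> 'a::{real_normed_algebra_1,banach}"
  assumes r: "0 < r" and f: "has_power_series r a f" and g: "has_power_series r b g"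
  shows "has_power_series r (coeff_commutator a b) (\<lambda>t. commutator (f t) (g t))"
    and "coeff_norm r (coeff_commutator a b) \<le> 2 * coeff_norm r a * coeff_norm r b"
proof -
  note fg = has_power_series_mult[OF f g r] and gf = has_power_series_mult[OF g f r]
  note diff = has_power_series_diff[OF fg(1) gf(1) less_imp_le[OF r]]
  show "has_power_series r (coeff_commutator a b) (\<lambda>t. commutator (f t) (g t))"
    using diff(1) by (simp add: coeff_commutator_def[abs_def] commutator_def)
  have "coeff_norm r (coeff_commutator a b) \<le>
      coeff_norm r (coeff_mult a b) + coeff_norm r (coeff_mult b a)"
    using diff(2) by (simp add: coeff_commutator_def[abs_def])
  also have "\<dots> \<le> coeff_norm r a * coeff_norm r b + coeff_norm r b * coeff_norm r a"
    by (rule add_mono[OF fg(2) gf(2)])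
  finally show "coeff_norm r (coeff_commutator a b) \<le> 2 * coeff_norm r a * coeff_norm r b"
    by (simp add: algebra_simps)
qed

lemma has_power_series_commutator_iter:
  fixes a b :: "nat \<Rightarrow> 'a::{real_normed_algebra_1,banach}"
  assumes r: "0 < r" and f: "has_power_series r a f" and g: "has_power_series r b g"
  shows "has_power_series r ((coeff_commutator a ^^ k) b) (\<lambda>t. (commutator (f t) ^^ k) (g t))
    \<and> coeff_norm r ((coeff_commutator a ^^ k) b) \<le> (2 * coeff_norm r a) ^ k * coeff_norm r b"
proof (induction k)
  case (Suc k)
  note step = has_power_series_commutator[OF r f conjunct1[OF Suc]]
  have "coeff_norm r ((coeff_commutator a ^^ Suc k) b) \<le>
      2 * coeff_norm r a * coeff_norm r ((coeff_commutator a ^^ k) b)"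
    using step(2) by simp
  also have "\<dots> \<le> 2 * coeff_norm r a * ((2 * coeff_norm r a) ^ k * coeff_norm r b)"
    using coeff_norm_nonneg[OF less_imp_le[OF r] f] by (intro mult_left_mono conjunct2[OF Suc]) simp
  finally show ?case
    using step(1) by (simp add: algebra_simps)
qed (use g in simp)

lemma has_power_series_commutator_integral_iter:
  fixes a :: "nat \<Rightarrow> 'a::{real_normed_algebra_1,banach}"
  assumes r: "0 < r" and A: "has_power_series r a A"
  shows "has_power_series r ((coeff_commutator (coeff_integral a) ^^ k) a)
      (\<lambda>t. (commutator (oint A t) ^^ k) (A t))"
    and "coeff_norm r ((coeff_commutator (coeff_integral a) ^^ k) a) \<le>
      (2 * r * coeff_norm r a) ^ k * coeff_norm r a"
proof -
  note I = has_power_series_oint[OF r A]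
  note iter = has_power_series_commutator_iter[OF r I(1) A, of k]
  then show "has_power_series r ((coeff_commutator (coeff_integral a) ^^ k) a)
      (\<lambda>t. (commutator (oint A t) ^^ k) (A t))"
    by simp
  have "(2 * coeff_norm r (coeff_integral a)) ^ k \<le> (2 * r * coeff_norm r a) ^ k"
    using I(2) coeff_norm_nonneg[OF less_imp_le[OF r] I(1)] by (intro power_mono) simp_all
  then show "coeff_norm r ((coeff_commutator (coeff_integral a) ^^ k) a) \<le>
      (2 * r * coeff_norm r a) ^ k * coeff_norm r a"
    using iter coeff_norm_nonneg[OF less_imp_le[OF r] A] by (meson mult_right_mono order_trans)
qed

text \<open>The factor \<open>exp (2 r N)\<close> absorbs the whole commutator series; it is harmless since only
  the square \<open>N\<^sup>2\<close> of the weighted norm \<open>N\<close> of \<open>A\<close> matters for the order in \<open>\<alpha>\<close>.\<close>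

lemma has_power_series_fer_series:
  fixes a :: "nat \<Rightarrow> 'a::{real_normed_algebra_1,banach}"
  assumes r: "0 < r" and A: "has_power_series r a A" and a: "vanishes_below q a"
  shows "\<exists>b. has_power_series r b (\<lambda>t. fer_series (oint A t) (A t)) \<and> vanishes_below (2 * q + 2) b \<and>
    coeff_norm r b \<le> 2 * r * coeff_norm r a ^ 2 * exp (2 * r * coeff_norm r a)"
proof -
  define N where "N = coeff_norm r a"
  define x where "x = 2 * r * N"
  define D where "D m = (coeff_commutator (coeff_integral a) ^^ Suc m) a" for m
  define e where "e m n = fer_coeff m *\<^sub>R D m n" for m n
  have D: "has_power_series r (D m) (\<lambda>t. (commutator (oint A t) ^^ Suc m) (A t))"
    "coeff_norm r (D m) \<le> x ^ Suc m * N" for m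
    using has_power_series_commutator_integral_iter[OF r A, of "Suc m"]
    by (simp_all only: D_def x_def N_def)
  have e: "has_power_series r (e m) (\<lambda>t. fer_coeff m *\<^sub>R (commutator (oint A t) ^^ Suc m) (A t))" for m
    unfolding e_def[abs_def] by (rule has_power_series_scaleR(1)[OF D(1)])
  have e_norm: "coeff_norm r (e m) \<le> 2 * r * N ^ 2 * (x ^ m /\<^sub>R fact m)" for m
  proof -
    have "coeff_norm r (e m) = \<bar>fer_coeff m\<bar> * coeff_norm r (D m)"
      unfolding e_def[abs_def] by (rule has_power_series_scaleR(2)[OF D(1)])
    also have "\<dots> \<le> 1 / fact m * (x ^ Suc m * N)"
      using abs_fer_coeff_le D(2) coeff_norm_nonneg[OF less_imp_le[OF r] D(1)]
      by (intro mult_mono) auto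
    also have "\<dots> = 2 * r * N ^ 2 * (x ^ m /\<^sub>R fact m)"
      by (simp add: x_def power2_eq_square divide_inverse)
    finally show ?thesis .
  qed
  have exp_sums: "(\<lambda>m. 2 * r * N ^ 2 * (x ^ m /\<^sub>R fact m)) sums (2 * r * N ^ 2 * exp x)"
    by (rule sums_mult[OF exp_converges])
  have "summable (\<lambda>m. coeff_norm r (e m))"
    by (rule summable_comparison_test'[OF sums_summable[OF exp_sums]])
      (use e_norm coeff_norm_nonneg[OF less_imp_le[OF r] e] in auto)
  note S = has_power_series_suminf[OF r e this]
  show ?thesis
  proof (intro exI conjI)
    show "has_power_series r (\<lambda>n. \<Sum>m. e m n) (\<lambda>t. fer_series (oint A t) (A t))"
      using S(1) by (simp add: fer_series_def)
    show "vanishes_below (2 * q + 2) (\<lambda>n. \<Sum>m. e m n)"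
      using vanishes_below_coeff_commutator_iter[OF a] by (simp add: vanishes_below_def e_def D_def)
    have "coeff_norm r (\<lambda>n. \<Sum>m. e m n) \<le> (\<Sum>m. 2 * r * N ^ 2 * (x ^ m /\<^sub>R fact m))"
      using S(2) suminf_le[OF e_norm \<open>summable _\<close> sums_summable[OF exp_sums]] by linarith
    then show "coeff_norm r (\<lambda>n. \<Sum>m. e m n) \<le> 2 * r * coeff_norm r a ^ 2 * exp (2 * r * coeff_norm r a)"
      using sums_unique[OF exp_sums] by (simp add: N_def x_def)
  qed
qed

section \<open>Fer's factorisation\<close>

fun fer_gen :: "(real \<Rightarrow> 'a::{real_normed_algebra_1,banach}) \<Rightarrow> nat \<Rightarrow> real \<Rightarrow> 'a" where
  "fer_gen A 0 t = A t"
| "fer_gen A (Suc j) t = fer_series (oint (fer_gen A j) t) (fer_gen A j t)"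

definition fer_prod :: "(real \<Rightarrow> 'a::{real_normed_algebra_1,banach}) \<Rightarrow> nat \<Rightarrow> real \<Rightarrow> 'a" where
  "fer_prod A k t = foldr (\<lambda>j P. exp (oint (fer_gen A j) t) * P) [0..<k] 1"

fun fer_rest :: "(real \<Rightarrow> 'a::{real_normed_algebra_1,banach}) \<Rightarrow> (real \<Rightarrow> 'a) \<Rightarrow> nat \<Rightarrow> real \<Rightarrow> 'a" where
  "fer_rest A U 0 t = U t"
| "fer_rest A U (Suc j) t = exp (- oint (fer_gen A j) t) * fer_rest A U j t"

lemma foldr_mult_eq_foldr_one_mult:
  fixes E :: "nat \<Rightarrow> 'a::monoid_mult"
  shows "foldr (\<lambda>j P. E j * P) xs Q = foldr (\<lambda>j P. E j * P) xs 1 * Q"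
  by (induction xs) (simp_all add: mult.assoc)

lemma fer_prod_0 [simp]: "fer_prod A 0 t = 1"
  by (simp add: fer_prod_def)

lemma fer_prod_Suc: "fer_prod A (Suc j) t = fer_prod A j t * exp (oint (fer_gen A j) t)"
  unfolding fer_prod_def by (simp add: foldr_mult_eq_foldr_one_mult[of _ _ "exp (oint (fer_gen A j) t)"])

lemma fer_prod_mult_fer_rest: "fer_prod A j t * fer_rest A U j t = U t"
  by (induction j) (simp_all add: fer_prod_Suc mult.assoc exp_minus_inverse flip: mult.assoc[of _ "exp _"])

lemma fer_rest_at_0: "U 0 = 1 \<Longrightarrow> fer_rest A U j 0 = 1"
  by (induction j) (simp_all add: oint_def)

lemma norm_fer_prod_le:
  assumes "\<And>j. j < k \<Longrightarrow> norm (oint (fer_gen A j) t) \<le> M j"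
  shows "norm (fer_prod A k t) \<le> exp (\<Sum>j<k. M j)"
  using assms
proof (induction k)
  case (Suc k)
  have "norm (fer_prod A (Suc k) t) \<le> norm (fer_prod A k t) * norm (exp (oint (fer_gen A k) t))"
    unfolding fer_prod_Suc by (rule norm_mult_ineq)
  also have "\<dots> \<le> exp (\<Sum>j<k. M j) * exp (M k)"
  proof (intro mult_mono Suc.IH)
    show "norm (exp (oint (fer_gen A k) t)) \<le> exp (M k)"
      using norm_exp[of "oint (fer_gen A k) t"] Suc.prems[of k] by (meson exp_le_cancel_iff lessI order_trans)
  qed (use Suc.prems in auto)
  finally show ?case by (simp add: exp_add)
qed simp

lemma has_vector_derivative_fer_rest:
  assumes \<Omega>: "\<And>i. i < j \<Longrightarrow> (oint (fer_gen A i) has_vector_derivative fer_gen A i t) (at t)"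
    and U: "(U has_vector_derivative A t * U t) (at t)"
  shows "(fer_rest A U j has_vector_derivative fer_gen A j t * fer_rest A U j t) (at t)"
  using \<Omega>
proof (induction j)
  case 0
  have "fer_rest A U 0 = U" by (simp add: fun_eq_iff)
  then show ?case using U by simp
next
  case (Suc j)
  have \<Omega>_j: "(oint (fer_gen A j) has_vector_derivative fer_gen A j t) (at t)"
    using Suc.prems by simp
  have IH: "(fer_rest A U j has_vector_derivative fer_gen A j t * fer_rest A U j t) (at t)"
    by (rule Suc.IH) (simp add: Suc.prems)
  have "fer_rest A U (Suc j) = (\<lambda>s. exp (- oint (fer_gen A j) s) * fer_rest A U j s)"
    by (simp add: fun_eq_iff)
  then show ?case
    using has_vector_derivative_exp_minus_mult[where A="fer_gen A j", OF \<Omega>_j IH] by simp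
qed

lemma has_power_series_fer_gen_Suc:
  fixes B :: "real \<Rightarrow> 'a::{real_normed_algebra_1,banach}"
  assumes r: "0 < r" and a: "has_power_series r a (fer_gen B j)"
    and q: "vanishes_below (2 ^ (j + 1) - 2) a" and N: "coeff_norm r a \<le> M"
  shows "\<exists>b. has_power_series r b (fer_gen B (Suc j)) \<and> vanishes_below (2 ^ (Suc j + 1) - 2) b \<and>
    coeff_norm r b \<le> 2 * r * M ^ 2 * exp (2 * r * M)"
proof -
  obtain b where b: "has_power_series r b (\<lambda>t. fer_series (oint (fer_gen B j) t) (fer_gen B j t))"
    and qb: "vanishes_below (2 * (2 ^ (j + 1) - 2) + 2) b"
    and Nb: "coeff_norm r b \<le> 2 * r * coeff_norm r a ^ 2 * exp (2 * r * coeff_norm r a)"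
    using has_power_series_fer_series[OF r a q] by blast
  have "2 \<le> (2::nat) ^ (j + 1)"
    using one_le_power[of "2::nat" j] by simp
  then have "2 * (2 ^ (j + 1) - 2) + 2 = 2 * 2 ^ (j + 1) - (2::nat)"
    by arith
  then have "2 * (2 ^ (j + 1) - 2) + 2 = 2 ^ (Suc j + 1) - (2::nat)"
    by simp
  moreover have "fer_gen B (Suc j) = (\<lambda>t. fer_series (oint (fer_gen B j) t) (fer_gen B j t))"
    by (simp add: fun_eq_iff)
  moreover have "2 * r * coeff_norm r a ^ 2 * exp (2 * r * coeff_norm r a) \<le> 2 * r * M ^ 2 * exp (2 * r * M)"
    using r N coeff_norm_nonneg[OF less_imp_le[OF r] a] by (intro mult_mono power_mono) auto
  ultimately show ?thesis
    using b qb Nb by auto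
qed

lemma fer_gen_power_series:
  fixes A0 :: "real \<Rightarrow> 'a::{real_normed_algebra_1,banach}"
  assumes r: "0 < r" and A0: "has_power_series r c A0"
  shows "\<exists>K\<ge>0. \<forall>\<alpha>. \<bar>\<alpha>\<bar> \<le> 1 \<longrightarrow> (\<exists>a. has_power_series r a (fer_gen (\<lambda>t. \<alpha> *\<^sub>R A0 t) j) \<and>
           vanishes_below (2 ^ (j + 1) - 2) a \<and> coeff_norm r a \<le> K * \<bar>\<alpha>\<bar> ^ 2 ^ j)"
proof (induction j)
  case 0
  have "fer_gen (\<lambda>t. \<alpha> *\<^sub>R A0 t) 0 = (\<lambda>t. \<alpha> *\<^sub>R A0 t)" for \<alpha>
    by (simp add: fun_eq_iff)
  then have "has_power_series r (\<lambda>n. \<alpha> *\<^sub>R c n) (fer_gen (\<lambda>t. \<alpha> *\<^sub>R A0 t) 0) \<and>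
      vanishes_below (2 ^ (0 + 1) - 2) (\<lambda>n. \<alpha> *\<^sub>R c n) \<and>
      coeff_norm r (\<lambda>n. \<alpha> *\<^sub>R c n) \<le> coeff_norm r c * \<bar>\<alpha>\<bar> ^ 2 ^ 0" for \<alpha>
    using has_power_series_scaleR[OF A0, of \<alpha>] by (simp add: vanishes_below_def mult.commute)
  then show ?case
    using coeff_norm_nonneg[OF less_imp_le[OF r] A0] by blast
next
  case (Suc j)
  then obtain K where K: "0 \<le> K" and IH: "\<And>\<alpha>. \<bar>\<alpha>\<bar> \<le> 1 \<Longrightarrow> \<exists>a. has_power_series r a (fer_gen (\<lambda>t. \<alpha> *\<^sub>R A0 t) j) \<and>
      vanishes_below (2 ^ (j + 1) - 2) a \<and> coeff_norm r a \<le> K * \<bar>\<alpha>\<bar> ^ 2 ^ j"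
    by blast
  have "2 * r * (K * \<bar>\<alpha>\<bar> ^ 2 ^ j) ^ 2 * exp (2 * r * (K * \<bar>\<alpha>\<bar> ^ 2 ^ j)) \<le>
      2 * r * K ^ 2 * exp (2 * r * K) * \<bar>\<alpha>\<bar> ^ 2 ^ Suc j" if "\<bar>\<alpha>\<bar> \<le> 1" for \<alpha>
  proof -
    have "K * \<bar>\<alpha>\<bar> ^ 2 ^ j \<le> K"
      using that K by (simp add: mult_left_le power_le_one)
    then have "2 * r * (K * \<bar>\<alpha>\<bar> ^ 2 ^ j) ^ 2 * exp (2 * r * (K * \<bar>\<alpha>\<bar> ^ 2 ^ j)) \<le>
        2 * r * (K * \<bar>\<alpha>\<bar> ^ 2 ^ j) ^ 2 * exp (2 * r * K)"
      using r by (intro mult_left_mono) auto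
    also have "\<dots> = 2 * r * K ^ 2 * exp (2 * r * K) * \<bar>\<alpha>\<bar> ^ 2 ^ Suc j"
      by (simp add: power_mult_distrib power_mult[symmetric] ac_simps)
    finally show ?thesis .
  qed
  then have "\<exists>b. has_power_series r b (fer_gen (\<lambda>t. \<alpha> *\<^sub>R A0 t) (Suc j)) \<and>
      vanishes_below (2 ^ (Suc j + 1) - 2) b \<and>
      coeff_norm r b \<le> 2 * r * K ^ 2 * exp (2 * r * K) * \<bar>\<alpha>\<bar> ^ 2 ^ Suc j"
    if "\<bar>\<alpha>\<bar> \<le> 1" for \<alpha>
    using IH[OF that] has_power_series_fer_gen_Suc[OF r] that by (meson order_trans)
  moreover have "0 \<le> 2 * r * K ^ 2 * exp (2 * r * K)"
    using r by simp
  ultimately show ?case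
    by blast
qed

lemma norm_linear_ode_diff_le:
  fixes V A :: "real \<Rightarrow> 'a::real_normed_algebra"
  assumes V: "\<And>s. \<bar>s\<bar> \<le> T \<Longrightarrow> (V has_vector_derivative A s * V s) (at s)"
    and A: "\<And>s. \<bar>s\<bar> \<le> T \<Longrightarrow> norm (A s) \<le> M"
    and VS: "\<And>s. \<bar>s\<bar> \<le> T \<Longrightarrow> norm (V s) \<le> S"
    and x: "\<bar>x\<bar> \<le> T"
  shows "norm (V x - V 0) \<le> M * S * \<bar>x\<bar>"
proof -
  have M: "0 \<le> M" and S: "0 \<le> S"
    using A[of 0] VS[of 0] x norm_ge_zero[of "A 0"] norm_ge_zero[of "V 0"] by linarith+
  have "norm (V x - V 0) \<le> (M * S) * norm (x - 0)"
  proof (rule differentiable_bound[where S="{-T..T}" and f'="\<lambda>x h. h *\<^sub>R (A x * V x)"])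
    fix y assume y: "y \<in> {-T..T}"
    show "(V has_derivative (\<lambda>h. h *\<^sub>R (A y * V y))) (at y within {-T..T})"
      using V[of y] y unfolding has_vector_derivative_def by (auto intro: has_derivative_at_withinI)
    have "norm (A y * V y) \<le> norm (A y) * norm (V y)"
      by (rule norm_mult_ineq)
    also have "\<dots> \<le> M * S"
      using A[of y] VS[of y] y M by (intro mult_mono) auto
    finally show "onorm (\<lambda>h. h *\<^sub>R (A y * V y)) \<le> M * S"
      using M S by (intro onorm_bound) (auto simp: mult.commute mult_left_mono)
  qed (use x in auto)
  then show ?thesis by simp
qed

text \<open>A Gronwall-type bound: the maximum \<open>S\<close> of \<open>\<parallel>V\<parallel>\<close> on \<open>[-T, T]\<close> satisfies
  \<open>S \<le> 1 + M T S \<le> 1 + S / 2\<close>, so \<open>S \<le> 2\<close>.\<close>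

lemma norm_linear_ode_minus_one_le:
  fixes V A :: "real \<Rightarrow> 'a::{real_normed_algebra_1,banach}"
  assumes T: "0 \<le> T"
    and V: "\<And>s. \<bar>s\<bar> \<le> T \<Longrightarrow> (V has_vector_derivative A s * V s) (at s)"
    and V0: "V 0 = 1"
    and A: "\<And>s. \<bar>s\<bar> \<le> T \<Longrightarrow> norm (A s) \<le> M"
    and MT: "M * T \<le> 1 / 2"
    and s: "\<bar>s\<bar> \<le> T"
  shows "norm (V s - 1) \<le> 2 * M * \<bar>s\<bar>"
proof -
  have M: "0 \<le> M" using A[of 0] T norm_ge_zero[of "A 0"] by linarith
  have "continuous_on {-T..T} V"
    by (intro continuous_at_imp_continuous_on ballI has_vector_derivative_continuous[OF V]) auto
  then have "\<exists>x\<in>{-T..T}. \<forall>y\<in>{-T..T}. norm (V y) \<le> norm (V x)"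
    by (intro continuous_attains_sup continuous_on_norm) (use T in auto)
  then obtain s0 where "s0 \<in> {-T..T}" and "\<forall>y\<in>{-T..T}. norm (V y) \<le> norm (V s0)"
    by blast
  then have s0: "\<bar>s0\<bar> \<le> T" and max: "\<And>x. \<bar>x\<bar> \<le> T \<Longrightarrow> norm (V x) \<le> norm (V s0)"
    by (auto simp: abs_le_iff)
  have diff_le: "norm (V x - V 0) \<le> M * norm (V s0) * \<bar>x\<bar>" if "\<bar>x\<bar> \<le> T" for x
    using V A max that by (rule norm_linear_ode_diff_le)
  have "norm (V s0) \<le> norm (V s0 - V 0) + 1"
    using norm_triangle_ineq[of "V s0 - V 0" "V 0"] V0 by simp
  also have "\<dots> \<le> M * norm (V s0) * T + 1"
    using diff_le[OF s0] mult_left_mono[OF s0, of "M * norm (V s0)"] M by simp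
  also have "M * norm (V s0) * T \<le> norm (V s0) / 2"
    using mult_left_mono[OF MT, of "norm (V s0)"] by (simp add: algebra_simps)
  finally have "norm (V s0) \<le> 2" by simp
  have "norm (V s - 1) \<le> M * norm (V s0) * \<bar>s\<bar>"
    using diff_le[OF s] V0 by simp
  also have "\<dots> \<le> M * 2 * \<bar>s\<bar>"
    using \<open>norm (V s0) \<le> 2\<close> M by (intro mult_right_mono mult_left_mono) auto
  finally show ?thesis by (simp add: mult.commute)
qed

lemma norm_linear_ode_minus_one_le_power:
  fixes a :: "nat \<Rightarrow> 'a::{real_normed_algebra_1,banach}"
  assumes r: "0 < r" and A: "has_power_series r a A" and a: "vanishes_below q a"
    and V: "\<And>s. \<bar>s\<bar> < r \<Longrightarrow> (V has_vector_derivative A s * V s) (at s)" and V0: "V 0 = 1"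
    and t: "\<bar>t\<bar> < r" and small: "coeff_norm r a * \<bar>t\<bar> \<le> 1 / 2"
  shows "norm (V t - 1) \<le> 2 * coeff_norm r a / r ^ q * \<bar>t\<bar> ^ Suc q"
proof -
  define M where "M = (\<bar>t\<bar> / r) ^ q * coeff_norm r a"
  have N0: "0 \<le> coeff_norm r a" by (rule coeff_norm_nonneg[OF less_imp_le[OF r] A])
  have "norm (A s) \<le> M" if "\<bar>s\<bar> \<le> \<bar>t\<bar>" for s
  proof -
    have "norm (A s) \<le> (\<bar>s\<bar> / r) ^ q * coeff_norm r a"
      using that t by (intro norm_le_coeff_norm[OF r A a]) simp
    also have "\<dots> \<le> M"
      unfolding M_def using that r N0 by (intro mult_right_mono power_mono divide_right_mono) auto
    finally show ?thesis .
  qed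
  moreover have "M * \<bar>t\<bar> \<le> 1 / 2"
  proof -
    have "(\<bar>t\<bar> / r) ^ q \<le> 1" using t r by (intro power_le_one) auto
    then have "M \<le> coeff_norm r a" unfolding M_def using N0 r by (intro mult_left_le_one_le) auto
    then show ?thesis using small by (meson abs_ge_zero mult_right_mono order_trans)
  qed
  ultimately have "norm (V t - 1) \<le> 2 * M * \<bar>t\<bar>"
    using V V0 t by (intro norm_linear_ode_minus_one_le[where T="\<bar>t\<bar>" and A=A]) auto
  also have "\<dots> = 2 * coeff_norm r a / r ^ q * \<bar>t\<bar> ^ Suc q"
    by (simp add: M_def power_divide)
  finally show ?thesis .
qed

lemma norm_fer_prod_minus_solution_le:
  fixes B U :: "real \<Rightarrow> 'a::{real_normed_algebra_1,banach}"
  assumes r: "0 < r" and a: "\<And>j. has_power_series r (a j) (fer_gen B j)"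
    and q: "vanishes_below q (a k)"
    and U0: "U 0 = 1" and U: "\<And>t. (U has_vector_derivative B t * U t) (at t)"
    and K: "\<And>j. j < k \<Longrightarrow> coeff_norm r (a j) \<le> K j"
    and M: "coeff_norm r (a k) \<le> M"
    and t: "\<bar>t\<bar> < r" and small: "M * \<bar>t\<bar> \<le> 1 / 2"
  shows "norm (fer_prod B k t - U t) \<le> exp (\<Sum>j<k. r * K j) * (2 * M / r ^ q * \<bar>t\<bar> ^ Suc q)"
proof -
  define V where "V = fer_rest B U k"
  have "norm (V t - 1) \<le> 2 * coeff_norm r (a k) / r ^ q * \<bar>t\<bar> ^ Suc q"
  proof (rule norm_linear_ode_minus_one_le_power[OF r a q _ _ t])
    show "(V has_vector_derivative fer_gen B k s * V s) (at s)" if "\<bar>s\<bar> < r" for s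
      unfolding V_def
      by (intro has_vector_derivative_fer_rest U has_power_series_oint(3)[OF r a that])
    show "V 0 = 1" unfolding V_def by (rule fer_rest_at_0[where U=U, OF U0])
    show "coeff_norm r (a k) * \<bar>t\<bar> \<le> 1 / 2"
      using mult_right_mono[OF M abs_ge_zero[of t]] small by linarith
  qed
  also have "\<dots> \<le> 2 * M / r ^ q * \<bar>t\<bar> ^ Suc q"
    using M r by (intro mult_right_mono divide_right_mono) auto
  finally have V_bound: "norm (1 - V t) \<le> 2 * M / r ^ q * \<bar>t\<bar> ^ Suc q"
    by (simp add: norm_minus_commute)
  have P_bound: "norm (fer_prod B k t) \<le> exp (\<Sum>j<k. r * K j)"
  proof (rule norm_fer_prod_le)
    fix j assume "j < k"
    have "norm (oint (fer_gen B j) t) \<le> (\<bar>t\<bar> / r) ^ 0 * coeff_norm r (coeff_integral (a j))"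
      by (rule norm_le_coeff_norm[OF r has_power_series_oint(1)[OF r a] _ t]) (simp add: vanishes_below_def)
    also have "\<dots> \<le> r * K j"
      using order_trans[OF has_power_series_oint(2)[OF r a] mult_left_mono[OF K[OF \<open>j < k\<close>]]] r
      by simp
    finally show "norm (oint (fer_gen B j) t) \<le> r * K j" .
  qed
  have "fer_prod B k t - U t = fer_prod B k t * (1 - V t)"
    using fer_prod_mult_fer_rest[of B k t U] by (simp add: V_def algebra_simps)
  then have "norm (fer_prod B k t - U t) \<le> norm (fer_prod B k t) * norm (1 - V t)"
    by (simp add: norm_mult_ineq)
  also have "\<dots> \<le> exp (\<Sum>j<k. r * K j) * (2 * M / r ^ q * \<bar>t\<bar> ^ Suc q)"
    by (rule mult_mono[OF P_bound V_bound]) auto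
  finally show ?thesis .
qed

theorem fer_prod_approximation:
  fixes A0 :: "real \<Rightarrow> 'a::{real_normed_algebra_1,banach}" and U :: "real \<Rightarrow> real \<Rightarrow> 'a"
  assumes r: "0 < r" and A0: "has_power_series r c A0"
    and U0: "\<And>\<alpha>. U \<alpha> 0 = 1"
    and U: "\<And>\<alpha> t. (U \<alpha> has_vector_derivative (\<alpha> *\<^sub>R A0 t) * U \<alpha> t) (at t)"
  shows "\<exists>C \<delta>. \<delta> > 0 \<and> (\<forall>\<alpha> t. \<bar>\<alpha>\<bar> < \<delta> \<and> \<bar>t\<bar> < \<delta> \<longrightarrow>
           norm (fer_prod (\<lambda>t. \<alpha> *\<^sub>R A0 t) k t - U \<alpha> t) \<le> C * \<bar>\<alpha>\<bar> ^ (2 ^ k) * \<bar>t\<bar> ^ (2 ^ (k + 1) - 1))"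
proof -
  obtain K where K: "\<And>j. 0 \<le> K j"
    and fer_gen_ps: "\<And>j \<alpha>. \<bar>\<alpha>\<bar> \<le> 1 \<Longrightarrow> \<exists>a. has_power_series r a (fer_gen (\<lambda>t. \<alpha> *\<^sub>R A0 t) j) \<and>
        vanishes_below (2 ^ (j + 1) - 2) a \<and> coeff_norm r a \<le> K j * \<bar>\<alpha>\<bar> ^ 2 ^ j"
    using fer_gen_power_series[OF r A0] by metis
  define q :: nat where "q = 2 ^ (k + 1) - 2"
  define \<delta> where "\<delta> = min 1 (min r (1 / (2 * K k + 1)))"
  have "2 \<le> (2::nat) ^ (k + 1)"
    using one_le_power[of "2::nat" k] by simp
  then have "Suc q = 2 ^ (k + 1) - 1"
    unfolding q_def by arith
  have "norm (fer_prod (\<lambda>t. \<alpha> *\<^sub>R A0 t) k t - U \<alpha> t) \<le>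
      (exp (\<Sum>j<k. r * K j) * 2 * K k / r ^ q) * \<bar>\<alpha>\<bar> ^ (2 ^ k) * \<bar>t\<bar> ^ (2 ^ (k + 1) - 1)"
    if \<alpha>: "\<bar>\<alpha>\<bar> < \<delta>" and t: "\<bar>t\<bar> < \<delta>" for \<alpha> t
  proof -
    have \<alpha>1: "\<bar>\<alpha>\<bar> \<le> 1" and tr: "\<bar>t\<bar> < r" and tK: "\<bar>t\<bar> \<le> 1 / (2 * K k + 1)"
      using \<alpha> t by (simp_all add: \<delta>_def)
    obtain a where a: "\<And>j. has_power_series r (a j) (fer_gen (\<lambda>t. \<alpha> *\<^sub>R A0 t) j)"
      and q: "\<And>j. vanishes_below (2 ^ (j + 1) - 2) (a j)"
      and N: "\<And>j. coeff_norm r (a j) \<le> K j * \<bar>\<alpha>\<bar> ^ 2 ^ j"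
      using fer_gen_ps[OF \<alpha>1] by metis
    have \<alpha>K: "K j * \<bar>\<alpha>\<bar> ^ 2 ^ j \<le> K j" for j
      using K[of j] \<alpha>1 by (simp add: mult_left_le power_le_one)
    have "K k * \<bar>\<alpha>\<bar> ^ 2 ^ k * \<bar>t\<bar> \<le> K k * (1 / (2 * K k + 1))"
      using \<alpha>K[of k] tK K[of k] by (intro mult_mono) auto
    also have "\<dots> \<le> 1 / 2"
      using K[of k] by (simp add: field_simps)
    finally have "norm (fer_prod (\<lambda>t. \<alpha> *\<^sub>R A0 t) k t - U \<alpha> t) \<le>
        exp (\<Sum>j<k. r * K j) * (2 * (K k * \<bar>\<alpha>\<bar> ^ 2 ^ k) / r ^ q * \<bar>t\<bar> ^ Suc q)"
      using N \<alpha>K q[of k] unfolding q_def[symmetric]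
      by (intro norm_fer_prod_minus_solution_le[OF r a _ U0 U _ _ tr]) (auto intro: order_trans)
    then show ?thesis
      unfolding \<open>Suc q = _\<close> by (simp add: ac_simps)
  qed
  moreover have "\<delta> > 0"
    using r K[of k] by (simp add: \<delta>_def)
  ultimately show ?thesis
    by blast
qed

section \<open>Matrices as bounded operators\<close>

text \<open>Matrices with the operator norm do not form a Banach algebra type in the library (the
  product on \<open>vec\<close> is componentwise), so they are embedded, via \<open>op_of_mat\<close>, into the bounded
  real-linear maps on \<open>complex^'n\<close>, with composition as product.\<close>

typedef (overloaded) ('n::finite) bounded_op = "UNIV :: ((complex^'n) \<Rightarrow>\<^sub>L (complex^'n)) set"
  morphisms Rep_bounded_op Abs_bounded_op by simp

setup_lifting type_definition_bounded_op

instantiation bounded_op :: (finite) real_normed_vector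
begin
lift_definition zero_bounded_op :: "'a bounded_op" is "0" .
lift_definition plus_bounded_op :: "'a bounded_op \<Rightarrow> 'a bounded_op \<Rightarrow> 'a bounded_op" is "(+)" .
lift_definition minus_bounded_op :: "'a bounded_op \<Rightarrow> 'a bounded_op \<Rightarrow> 'a bounded_op" is "(-)" .
lift_definition uminus_bounded_op :: "'a bounded_op \<Rightarrow> 'a bounded_op" is "uminus" .
lift_definition scaleR_bounded_op :: "real \<Rightarrow> 'a bounded_op \<Rightarrow> 'a bounded_op" is "scaleR" .
lift_definition norm_bounded_op :: "'a bounded_op \<Rightarrow> real" is "norm" .
definition dist_bounded_op :: "'a bounded_op \<Rightarrow> 'a bounded_op \<Rightarrow> real" where "dist_bounded_op a b = norm (a - b)"
definition sgn_bounded_op :: "'a bounded_op \<Rightarrow> 'a bounded_op" where "sgn_bounded_op x = scaleR (inverse (norm x)) x"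
definition uniformity_bounded_op :: "('a bounded_op \<times> 'a bounded_op) filter" where
  "uniformity_bounded_op = (INF e\<in>{0 <..}. principal {(x, y). dist x y < e})"
definition open_bounded_op :: "'a bounded_op set \<Rightarrow> bool" where
  "open_bounded_op S = (\<forall>x\<in>S. \<forall>\<^sub>F (x', y) in uniformity. x' = x \<longrightarrow> y \<in> S)"
instance
proof
  fix a b c :: "'a bounded_op" and r s :: real
  show "a + b + c = a + (b + c)" by transfer (rule add.assoc)
  show "a + b = b + a" by transfer (rule add.commute)
  show "0 + a = a" by transfer simp
  show "- a + a = 0" by transfer simp
  show "a - b = a + - b" by transfer simp
  show "r *\<^sub>R (a + b) = r *\<^sub>R a + r *\<^sub>R b" by transfer (rule scaleR_add_right)
  show "(r + s) *\<^sub>R a = r *\<^sub>R a + s *\<^sub>R a" by transfer (rule scaleR_add_left)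
  show "r *\<^sub>R s *\<^sub>R a = (r * s) *\<^sub>R a" by transfer simp
  show "1 *\<^sub>R a = a" by transfer simp
  show "dist a b = norm (a - b)" by (simp add: dist_bounded_op_def)
  show "sgn a = inverse (norm a) *\<^sub>R a" by (simp add: sgn_bounded_op_def)
  show "(norm a = 0) = (a = 0)" by transfer simp
  show "norm (a + b) \<le> norm a + norm b" by transfer (rule norm_triangle_ineq)
  show "norm (r *\<^sub>R a) = \<bar>r\<bar> * norm a" by transfer simp
next
  show "(uniformity :: ('a bounded_op \<times> 'a bounded_op) filter) = (INF e\<in>{0 <..}. principal {(x, y). dist x y < e})"
    by (simp add: uniformity_bounded_op_def)
next
  fix U :: "'a bounded_op set"
  show "open U = (\<forall>x\<in>U. \<forall>\<^sub>F (x', y) in uniformity. x' = x \<longrightarrow> y \<in> U)"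
    by (simp add: open_bounded_op_def)
qed
end

instantiation bounded_op :: (finite) real_normed_algebra_1
begin
lift_definition times_bounded_op :: "'a bounded_op \<Rightarrow> 'a bounded_op \<Rightarrow> 'a bounded_op" is "blinfun_compose" .
lift_definition one_bounded_op :: "'a bounded_op" is "id_blinfun" .
instance
proof
  fix a b c :: "'a bounded_op" and r :: real
  show "a * b * c = a * (b * c)" by transfer (rule blinfun_eqI, simp)
  show "(a + b) * c = a * c + b * c" by transfer (rule blinfun_eqI, simp add: blinfun.bilinear_simps)
  show "a * (b + c) = a * b + a * c" by transfer (rule blinfun_eqI, simp add: blinfun.bilinear_simps)
  show "1 * a = a" by transfer (rule blinfun_eqI, simp)
  show "a * 1 = a" by transfer (rule blinfun_eqI, simp)
  show "r *\<^sub>R a * b = r *\<^sub>R (a * b)" by transfer (rule blinfun_eqI, simp add: blinfun.bilinear_simps)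
  show "a * r *\<^sub>R b = r *\<^sub>R (a * b)" by transfer (rule blinfun_eqI, simp add: blinfun.bilinear_simps)
  show "norm (a * b) \<le> norm a * norm b" by transfer (rule norm_blinfun_compose)
  show "norm (1 :: 'a bounded_op) = 1" by transfer (rule norm_blinfun_id)
  show "(0 :: 'a bounded_op) \<noteq> 1"
  proof
    assume "(0 :: 'a bounded_op) = 1"
    then have "norm (0 :: 'a bounded_op) = norm (1 :: 'a bounded_op)" by simp
    moreover have "norm (1 :: 'a bounded_op) = 1" by transfer (rule norm_blinfun_id)
    ultimately show False by simp
  qed
qed
end

lemma norm_bounded_op_diff: "norm (a - b) = norm (Rep_bounded_op a - Rep_bounded_op b)"
  by transfer simp

instance bounded_op :: (finite) banach
proof
  fix X :: "nat \<Rightarrow> 'a bounded_op"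
  assume "Cauchy X"
  then have "Cauchy (\<lambda>n. Rep_bounded_op (X n))"
    unfolding Cauchy_iff by (simp add: norm_bounded_op_diff)
  then obtain L where L: "(\<lambda>n. Rep_bounded_op (X n)) \<longlonglongrightarrow> L"
    using convergent_def Cauchy_convergent_iff by blast
  have "X \<longlonglongrightarrow> Abs_bounded_op L"
    using L unfolding LIMSEQ_iff by (simp add: norm_bounded_op_diff Abs_bounded_op_inverse)
  then show "convergent X" by (rule convergentI)
qed


lemma bounded_linear_matrix_vector_mult: "bounded_linear (\<lambda>x::complex^'n. M *v x)"
proof -
  have "linear (\<lambda>x::complex^'n. M *v x)"
  proof (rule linearI)
    fix x y :: "complex^'n" show "M *v (x + y) = M *v x + M *v y" by (rule matrix_vector_right_distrib)
  next
    fix c :: real and x :: "complex^'n"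
    show "M *v (c *\<^sub>R x) = c *\<^sub>R (M *v x)"
      by (simp add: vec_eq_iff matrix_vector_mult_def scaleR_sum_right)
  qed
  then show ?thesis by (simp add: linear_conv_bounded_linear)
qed

definition op_of_mat :: "complex^'n^'n \<Rightarrow> 'n::finite bounded_op" where
  "op_of_mat M = Abs_bounded_op (Blinfun (\<lambda>x. M *v x))"

lemma Rep_op_of_mat: "blinfun_apply (Rep_bounded_op (op_of_mat M)) = (\<lambda>x. M *v x)"
  by (simp add: op_of_mat_def Abs_bounded_op_inverse bounded_linear_Blinfun_apply bounded_linear_matrix_vector_mult)

lemma bounded_op_eqI: "(\<And>x. blinfun_apply (Rep_bounded_op a) x = blinfun_apply (Rep_bounded_op b) x) \<Longrightarrow> a = b"
  by (metis Rep_bounded_op_inject blinfun_eqI)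

lemma op_of_mat_add: "op_of_mat (M + N) = op_of_mat M + op_of_mat N"
  by (rule bounded_op_eqI) (simp add: Rep_op_of_mat plus_bounded_op.rep_eq blinfun.add_left matrix_vector_mult_add_rdistrib)

lemma op_of_mat_scaleR: "op_of_mat (c *\<^sub>R M) = c *\<^sub>R op_of_mat M"
  by (rule bounded_op_eqI) (simp add: Rep_op_of_mat scaleR_bounded_op.rep_eq blinfun.scaleR_left vec_eq_iff matrix_vector_mult_def scaleR_sum_right)

lemma op_of_mat_mult: "op_of_mat (M ** N) = op_of_mat M * op_of_mat N"
  by (rule bounded_op_eqI) (simp add: Rep_op_of_mat times_bounded_op.rep_eq matrix_vector_mul_assoc)

lemma op_of_mat_one: "op_of_mat (mat 1) = 1"
  by (rule bounded_op_eqI) (simp add: Rep_op_of_mat one_bounded_op.rep_eq)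

lemma linear_op_of_mat: "linear op_of_mat"
  by (rule linearI) (simp_all add: op_of_mat_add op_of_mat_scaleR)

lemma bounded_linear_op_of_mat: "bounded_linear op_of_mat"
  using linear_op_of_mat by (simp add: linear_conv_bounded_linear)

lemma op_of_mat_diff: "op_of_mat (M - N) = op_of_mat M - op_of_mat N"
  by (rule linear_diff[OF linear_op_of_mat])

lemma norm_op_of_mat: "norm (op_of_mat M) = opnorm M"
  by (simp add: norm_bounded_op.rep_eq norm_blinfun.rep_eq Rep_op_of_mat opnorm_def)

definition mat_of_op :: "'n::finite bounded_op \<Rightarrow> complex^'n^'n" where
  "mat_of_op L = (\<chi> i j. blinfun_apply (Rep_bounded_op L) (axis j 1) $ i)"

lemma mat_of_op_op_of_mat: "mat_of_op (op_of_mat M) = M"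
  by (simp add: mat_of_op_def Rep_op_of_mat vec_eq_iff matrix_vector_mult_def axis_def if_distrib sum.delta sum.delta' cong: if_cong)

lemma bounded_linear_mat_of_op: "bounded_linear (mat_of_op :: 'n::finite bounded_op \<Rightarrow> _)"
proof (rule bounded_linear_intro[where K="real (CARD('n)) * real (CARD('n))"])
  fix a b :: "'n bounded_op"
  show "mat_of_op (a + b) = mat_of_op a + mat_of_op b"
    by (simp add: mat_of_op_def plus_bounded_op.rep_eq vec_eq_iff blinfun.add_left)
next
  fix r :: real and a :: "'n bounded_op"
  show "mat_of_op (r *\<^sub>R a) = r *\<^sub>R mat_of_op a"
    by (simp add: mat_of_op_def scaleR_bounded_op.rep_eq vec_eq_iff blinfun.scaleR_left)
next
  fix L :: "'n bounded_op"
  have row: "norm (mat_of_op L $ i) \<le> real (CARD('n)) * norm L" for i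
  proof -
    have "norm (mat_of_op L $ i) \<le> (\<Sum>j\<in>UNIV. norm (mat_of_op L $ i $ j))"
      unfolding norm_vec_def by (rule L2_set_le_sum) simp
    also have "\<dots> \<le> (\<Sum>j\<in>(UNIV::'n set). norm L)"
    proof (rule sum_mono)
      fix j
      have "mat_of_op L $ i $ j = blinfun_apply (Rep_bounded_op L) (axis j 1) $ i" by (simp add: mat_of_op_def)
      then have "norm (mat_of_op L $ i $ j) \<le> norm (blinfun_apply (Rep_bounded_op L) (axis j 1))"
        using Finite_Cartesian_Product.norm_nth_le by metis
      also have "\<dots> \<le> norm (Rep_bounded_op L) * norm (axis j (1::complex))" by (rule norm_blinfun)
      finally show "norm (mat_of_op L $ i $ j) \<le> norm L" by (simp add: norm_bounded_op.rep_eq norm_axis_1)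
    qed
    finally show ?thesis by simp
  qed
  have "norm (mat_of_op L) \<le> (\<Sum>i\<in>UNIV. norm (mat_of_op L $ i))"
    unfolding norm_vec_def by (rule L2_set_le_sum) simp
  also have "\<dots> \<le> (\<Sum>i\<in>(UNIV::'n set). real (CARD('n)) * norm L)" by (rule sum_mono[OF row])
  finally show "norm (mat_of_op L) \<le> norm L * (real (CARD('n)) * real (CARD('n)))" by (simp add: algebra_simps)
qed


lemma summable_of_summable_op_of_mat: "summable (\<lambda>k. op_of_mat (f k)) \<Longrightarrow> summable f"
  using bounded_linear.summable[OF bounded_linear_mat_of_op, of "\<lambda>k. op_of_mat (f k)"] by (simp add: mat_of_op_op_of_mat)

lemma op_of_mat_suminf: "summable (\<lambda>k. op_of_mat (f k)) \<Longrightarrow> op_of_mat (suminf f) = (\<Sum>k. op_of_mat (f k))"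
  by (rule bounded_linear.suminf[OF bounded_linear_op_of_mat summable_of_summable_op_of_mat])

lemma op_of_mat_zero: "op_of_mat 0 = 0"
  by (rule linear_0[OF linear_op_of_mat])

lemma op_of_mat_uminus: "op_of_mat (- M) = - op_of_mat M"
  by (rule linear_neg[OF linear_op_of_mat])

lemma op_of_mat_integral: "op_of_mat (integral S f) = integral S (\<lambda>x. op_of_mat (f x))"
proof (cases "f integrable_on S")
  case True
  then show ?thesis using integral_linear[OF True bounded_linear_op_of_mat] by (simp add: o_def)
next
  case False
  have "\<not> (\<lambda>x. op_of_mat (f x)) integrable_on S"
  proof
    assume "(\<lambda>x. op_of_mat (f x)) integrable_on S"
    from integrable_linear[OF this bounded_linear_mat_of_op] have "f integrable_on S" by (simp add: o_def mat_of_op_op_of_mat)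
    with False show False by simp
  qed
  then show ?thesis using False by (simp add: not_integrable_integral op_of_mat_zero)
qed

lemma op_of_mat_oint: "op_of_mat (oint f t) = oint (\<lambda>s. op_of_mat (f s)) t"
  by (simp add: oint_def op_of_mat_integral op_of_mat_uminus)

lemma op_of_mat_mpow: "op_of_mat (mpow M k) = op_of_mat M ^ k"
  by (induction k) (simp_all add: op_of_mat_one op_of_mat_mult)

lemma op_of_mat_mexp: "op_of_mat (mexp M) = exp (op_of_mat M)"
proof -
  have e: "(\<lambda>k. op_of_mat ((1 / fact k) *\<^sub>R mpow M k)) = (\<lambda>k. op_of_mat M ^ k /\<^sub>R fact k)"
    by (simp add: op_of_mat_scaleR op_of_mat_mpow divide_inverse)
  have s: "summable (\<lambda>k. op_of_mat ((1 / fact k) *\<^sub>R mpow M k))" unfolding e by (rule summable_exp_generic)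
  show ?thesis unfolding mexp_def op_of_mat_suminf[OF s] e exp_def ..
qed

lemma op_of_mat_ad: "op_of_mat (ad X Y) = commutator (op_of_mat X) (op_of_mat Y)"
  by (simp add: ad_def commutator_def op_of_mat_diff op_of_mat_mult)

lemma op_of_mat_ad_iter: "op_of_mat ((ad X ^^ k) Y) = (commutator (op_of_mat X) ^^ k) (op_of_mat Y)"
  by (induction k) (simp_all add: op_of_mat_ad)

lemma op_of_mat_magA: "op_of_mat (magA \<alpha> A0 j t) = fer_gen (\<lambda>t. \<alpha> *\<^sub>R op_of_mat (A0 t)) j t"
proof (induction j arbitrary: t)
  case 0 then show ?case by (simp add: op_of_mat_scaleR)
next
  case (Suc j)
  define B where "B = (\<lambda>t. \<alpha> *\<^sub>R op_of_mat (A0 t))"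
  have IH: "(\<lambda>s. op_of_mat (magA \<alpha> A0 j s)) = fer_gen B j" using Suc unfolding B_def by (simp add: fun_eq_iff)
  define g where "g m = fer_coeff m *\<^sub>R (ad (oint (magA \<alpha> A0 j) t) ^^ Suc m) (magA \<alpha> A0 j t)" for m
  have g: "op_of_mat (g m) = fer_coeff m *\<^sub>R (commutator (oint (fer_gen B j) t) ^^ Suc m) (fer_gen B j t)" for m
    unfolding g_def op_of_mat_scaleR op_of_mat_ad_iter op_of_mat_oint IH using Suc unfolding B_def by simp
  have "magA \<alpha> A0 (Suc j) t = suminf g"
    unfolding g_def[abs_def] fer_coeff_def by (simp only: magA.simps)
  moreover have "summable (\<lambda>m. op_of_mat (g m))"
    unfolding g by (rule summable_fer_series)
  ultimately have "op_of_mat (magA \<alpha> A0 (Suc j) t) = (\<Sum>m. op_of_mat (g m))"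
    using op_of_mat_suminf[of g] by simp
  also have "\<dots> = fer_gen B (Suc j) t" unfolding g by (simp add: fer_series_def)
  finally show ?case unfolding B_def .
qed

lemma op_of_mat_foldr:
  "op_of_mat (foldr (\<lambda>j P. mexp (oint (magA \<alpha> A0 j) t) ** P) xs Q) =
   foldr (\<lambda>j P. exp (oint (fer_gen (\<lambda>t. \<alpha> *\<^sub>R op_of_mat (A0 t)) j) t) * P) xs (op_of_mat Q)"
proof (induction xs)
  case Nil then show ?case by simp
next
  case (Cons x xs)
  have e: "(\<lambda>s. op_of_mat (magA \<alpha> A0 x s)) = fer_gen (\<lambda>t. \<alpha> *\<^sub>R op_of_mat (A0 t)) x"
    by (simp add: fun_eq_iff op_of_mat_magA)
  show ?case using Cons by (simp add: op_of_mat_mult op_of_mat_mexp op_of_mat_oint e)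
qed

lemma op_of_mat_UF: "op_of_mat (UF \<alpha> A0 k t) = fer_prod (\<lambda>t. \<alpha> *\<^sub>R op_of_mat (A0 t)) k t"
  unfolding UF_def fer_prod_def op_of_mat_foldr op_of_mat_one ..



theorem theorem3:
  fixes A0 :: "real \<Rightarrow> complex^'n^'n"
    and U :: "real \<Rightarrow> real \<Rightarrow> complex^'n^'n"
    and k :: nat
  assumes analytic: "real_analytic A0"
    and k: "k \<ge> 1"
    and U0: "\<And>\<alpha>. U \<alpha> 0 = mat 1"
    and Uderiv: "\<And>\<alpha> t. (U \<alpha> has_vector_derivative ((\<alpha> *\<^sub>R A0 t) ** U \<alpha> t)) (at t)"
  shows "\<exists>C \<delta>. \<delta> > 0 \<and>
           (\<forall>\<alpha> t. \<bar>\<alpha>\<bar> < \<delta> \<and> \<bar>t\<bar> < \<delta> \<longrightarrow>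
              opnorm (UF \<alpha> A0 k t - U \<alpha> t) \<le> C * \<bar>\<alpha>\<bar> ^ (2 ^ k) * \<bar>t\<bar> ^ (2 ^ (k + 1) - 1))"
proof -
  \<comment> \<open>The bound also holds for \<open>k = 0\<close>.\<close>
  obtain r c where r: "0 < r" and "has_power_series r c A0"
    using has_power_series_of_real_analytic[OF analytic] by blast
  then have A0: "has_power_series r (\<lambda>n. op_of_mat (c n)) (\<lambda>t. op_of_mat (A0 t))"
    by (intro has_power_series_bounded_linear[OF bounded_linear_op_of_mat]) auto
  have "op_of_mat (U \<alpha> 0) = 1" for \<alpha>
    by (simp add: U0 op_of_mat_one)
  moreover have "((\<lambda>t. op_of_mat (U \<alpha> t)) has_vector_derivative
      (\<alpha> *\<^sub>R op_of_mat (A0 t)) * op_of_mat (U \<alpha> t)) (at t)" for \<alpha> t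
    using bounded_linear.has_vector_derivative[OF bounded_linear_op_of_mat Uderiv[of \<alpha> t]]
    by (simp add: op_of_mat_mult op_of_mat_scaleR)
  moreover have "opnorm (UF \<alpha> A0 k t - U \<alpha> t) =
      norm (fer_prod (\<lambda>t. \<alpha> *\<^sub>R op_of_mat (A0 t)) k t - op_of_mat (U \<alpha> t))" for \<alpha> t
    by (simp add: norm_op_of_mat[symmetric] op_of_mat_diff op_of_mat_UF)
  ultimately show ?thesis
    using fer_prod_approximation[OF r A0, of "\<lambda>\<alpha> t. op_of_mat (U \<alpha> t)" k] by simp
qed

end
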